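(* Assume in addition $\tilde m\le0$. For $y\ge0$, consider $$V(y)=\inf_{Y\in\mathcal A_D(y)}\int_0^\infty\big(\hat\kappa_{\tilde A}(Y_t)+A\xi_tF(\xi_t)\big)\,dt.$$ Let $\tau=\int_0^y\frac{du}{G(\hat\kappa_{\tilde A}(u)/A)}\in[0,\infty]$ and let $Y^*$ be given by $\int_{Y^*_t}^y\frac{du}{G(\hat\kappa_{\tilde A}(u)/A)}=t$ for $t\le\tau$ and $Y^*_t=0$ for $t>\tau$. Then $Y^*$ is the unique optimal element of $\mathcal A_D(y)$, its speed is $\xi^*_t=G\big(\hat\kappa_{\tilde A}(Y^*_t)/A\big)$ for all $t\ge0$, and $$V(y)=\int_0^y\Big\{\frac{\hat\kappa_{\tilde A}(u)}{G\big(\hat\kappa_{\tilde A}(u)/A\big)}+AF\Big(G\Big(\frac{\hat\kappa_{\tilde A}(u)}{A}\Big)\Big)\Big\}\,du,\qquad y\ge0.$$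
   Context: Let $\tilde L$ be a non-trivial one-dimensional Lévy process with canonical decomposition $\tilde L_t=\tilde\mu t+\tilde\sigma\tilde W_t+\int_{|z|\ge1}z\,\tilde N(t,dz)+\int_{|z|<1}z\,(\tilde N(t,dz)-t\tilde\nu(dz))$ ($\tilde W$ standard Brownian motion, $\tilde N$ Poisson random measure independent of $\tilde W$ with compensator $t\tilde\nu(dz)$), where $\tilde\nu$ has a Lebesgue density and $\int_{|z|\ge1}e^{2z}\,\tilde\nu(dz)<\infty$. Let $\tilde m=\tilde\mu+\frac{\tilde\sigma^2}{2}+\int_{\mathbb R}(e^z-1-z\mathbf 1_{\{|z|<1\}})\,\tilde\nu(dz)$, $\tilde s>0$, $\hat L_t=\tilde mt+\tilde\sigma\tilde W_t+\int_{\mathbb R}(e^z-1)\,(\tilde N(t,dz)-t\tilde\nu(dz))$ (a Lévy process with drift $\tilde m$), and $L=\tilde s\hat L$. Let $A>0$, $\tilde A=A\tilde s$, $\hat\kappa(x)=\ln\mathbb E[e^{x\hat L_1}]$ and $\hat\kappa_{\tilde A}(x)=\hat\kappa(-\tilde Ax)$ for $x\ge0$. $\mathcal A_D(y)$ is the set of deterministic absolutely continuous non-increasing functions $Y$ with $Y_0=y$ such that $\int_0^\infty|Y_t|\,dt<\infty$ if $\tilde m\ne0$ and $\int_0^\infty Y_t^2\,dt<\infty$ if $\tilde m=0$; $Y_t=y-\int_0^t\xi_s\,ds$ with $\xi\ge0$. $F:[0,\infty)\to[0,\infty)$ satisfies (i) $F\in C([0,\infty))\cap C^1((0,\infty))$;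 (ii) $F(0)=0$; (iii) $x\mapsto xF(x)$ is strictly convex on $[0,\infty)$; (iv) $x\mapsto x^2F'(x)$ is strictly increasing on $(0,\infty)$ and tends to $\infty$ as $x\to\infty$. $G:[0,\infty)\to[0,\infty)$ is the inverse of $x\mapsto x^2F'(x)$, with $G(0)=0$. *)

theory Defs
  imports "HOL-Analysis.Analysis"
begin

definition strictly_convex_on :: "real set \<Rightarrow> (real \<Rightarrow> real) \<Rightarrow> bool" where
  "strictly_convex_on S f \<longleftrightarrow>
     (\<forall>x\<in>S. \<forall>z\<in>S. x \<noteq> z \<longrightarrow>
        (\<forall>t::real. 0 < t \<and> t < 1 \<longrightarrow> f ((1 - t) * x + t * z) < (1 - t) * f x + t * f z))"

text \<open>Parameters: the characteristic triplet (mu, sig, nu) of the Levy process L-tilde.\<close>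

definition mtilde :: "real \<Rightarrow> real \<Rightarrow> real measure \<Rightarrow> real" where
  "mtilde mu sig nu =
     mu + sig\<^sup>2 / 2 + (\<integral>z. (exp z - 1 - z * indicator {-1<..<1} z) \<partial>nu)"

text \<open>Cumulant function kappa-hat(x) = ln E[exp(x * Lhat_1)], written through the
  Levy-Khintchine formula for Lhat, which has drift mtilde, Gaussian coefficient sig
  and compensated jumps e^z - 1 (z distributed according to nu).\<close>

definition kappahat :: "real \<Rightarrow> real \<Rightarrow> real measure \<Rightarrow> real \<Rightarrow> real" where
  "kappahat mu sig nu x =
     mtilde mu sig nu * x + sig\<^sup>2 * x\<^sup>2 / 2
     + (\<integral>z. (exp (x * (exp z - 1)) - 1 - x * (exp z - 1)) \<partial>nu)"

definition kappaA :: "real \<Rightarrow> real \<Rightarrow> real measure \<Rightarrow> real \<Rightarrow> real \<Rightarrow> real" where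
  "kappaA mu sig nu At u = kappahat mu sig nu (- At * u)"

definition invG :: "(real \<Rightarrow> real) \<Rightarrow> real \<Rightarrow> real" where
  "invG F w = (if w \<le> 0 then 0 else THE x. 0 < x \<and> x\<^sup>2 * deriv F x = w)"

definition traj :: "real \<Rightarrow> (real \<Rightarrow> real) \<Rightarrow> real \<Rightarrow> real" where
  "traj y \<xi> t = y - (LINT s:{0..t}|lborel. \<xi> s)"

text \<open>xi is the speed of an element of A_D(y) (with drift parameter m = mtilde).\<close>

definition admissible :: "real \<Rightarrow> real \<Rightarrow> (real \<Rightarrow> real) \<Rightarrow> bool" where
  "admissible m y \<xi> \<longleftrightarrow>
     (\<forall>t\<ge>0. 0 \<le> \<xi> t) \<and>
     (\<forall>t\<ge>0. set_integrable lborel {0..t} \<xi>) \<and>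
     (if m \<noteq> 0 then set_integrable lborel {0..} (\<lambda>t. \<bar>traj y \<xi> t\<bar>)
      else set_integrable lborel {0..} (\<lambda>t. (traj y \<xi> t)\<^sup>2))"

definition cost :: "(real \<Rightarrow> real) \<Rightarrow> real \<Rightarrow> (real \<Rightarrow> real) \<Rightarrow> real \<Rightarrow> (real \<Rightarrow> real) \<Rightarrow> ennreal" where
  "cost K A F y \<xi> =
     (\<integral>\<^sup>+ t\<in>{0..}. ennreal (K (traj y \<xi> t) + A * \<xi> t * F (\<xi> t)) \<partial>lborel)"

definition valueV :: "real \<Rightarrow> (real \<Rightarrow> real) \<Rightarrow> real \<Rightarrow> (real \<Rightarrow> real) \<Rightarrow> real \<Rightarrow> ennreal" where
  "valueV m K A F y = (INF \<xi> \<in> {\<xi>. admissible m y \<xi>}. cost K A F y \<xi>)"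

definition Phi :: "(real \<Rightarrow> real) \<Rightarrow> real \<Rightarrow> (real \<Rightarrow> real) \<Rightarrow> real \<Rightarrow> real \<Rightarrow> ennreal" where
  "Phi K A F y z = (\<integral>\<^sup>+ u\<in>{z..y}. ennreal (1 / invG F (K u / A)) \<partial>lborel)"

definition tau :: "(real \<Rightarrow> real) \<Rightarrow> real \<Rightarrow> (real \<Rightarrow> real) \<Rightarrow> real \<Rightarrow> ennreal" where
  "tau K A F y = Phi K A F y 0"

definition Ystar :: "(real \<Rightarrow> real) \<Rightarrow> real \<Rightarrow> (real \<Rightarrow> real) \<Rightarrow> real \<Rightarrow> real \<Rightarrow> real" where
  "Ystar K A F y t =
     (if ennreal t \<le> tau K A F y
      then (THE z. 0 \<le> z \<and> z \<le> y \<and> Phi K A F y z = ennreal t)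
      else 0)"

end

(*
  Let speed u = G (K u / A) and unit_cost u = K u / speed u + A F (speed u), K being the cumulant
  kappa-hat_A-tilde.  The tangent to the convex function x F x at p = speed u has slope
  F p + p F'(p), and p^2 F'(p) = K u / A says exactly that the running cost splits as
    K (Y_t) + A xi_t F (xi_t) = excess (xi_t, Y_t) + xi_t unit_cost (Y_t),
  where excess >= 0 vanishes only at xi_t = speed (Y_t).  Every admissible Y decreases from y to 0,
  so the substitution u = Y_t turns the integral of xi_t unit_cost (Y_t) into the integral of
  unit_cost over [0, y], whatever the strategy.  Hence V y is that integral, and the optimal
  strategies are the solutions of the feedback equation xi_t = speed (Y_t); along such a solution
  Phi (Y_t) is the time spent at a positive level before t, which forces Y = Y*.
  For merely integrable speeds the substitution rests on the fact that the primitive of a density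
  g pushes g dt forward to Lebesgue measure.  Positivity of K and admissibility of Y* come from the
  growth of the cumulant near 0: linear if m-tilde < 0, and quadratic, through the Gaussian part or
  through the jumps, if m-tilde = 0.
*)

theory Submission
  imports Defs "HOL-Probability.Probability"
begin

section \<open>Substitution along a primitive\<close>

lemma borel_measurable_antimono:
  fixes g :: "real \<Rightarrow> real"
  assumes "antimono g"
  shows "g \<in> borel_measurable borel"
proof -
  have "(\<lambda>r. - g r) \<in> borel_measurable borel"
    using assms by (intro borel_measurable_mono) (auto simp: mono_def antimono_def)
  then show ?thesis
    using borel_measurable_uminus[of "\<lambda>r. - g r"] by simp
qed

context
  fixes g :: "real \<Rightarrow> real" and T :: real
  assumes g_nonneg: "\<And>r. 0 \<le> g r" and g_integrable: "integrable lborel g"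
    and g_vanishes: "\<And>r. r \<notin> {0..T} \<Longrightarrow> g r = 0" and T_nonneg: "0 \<le> T"
begin

private abbreviation (input) X :: "real \<Rightarrow> real" where
  "X v \<equiv> LINT r:{0..v}|lborel. g r"

private lemma g_measurable[measurable]: "g \<in> borel_measurable borel"
  using borel_measurable_integrable[OF g_integrable] by simp

private lemma ennreal_primitive: "ennreal (X v) = (\<integral>\<^sup>+r\<in>{0..v}. g r \<partial>lborel)"
  using g_nonneg by (intro nn_set_integral_eq_set_integral[symmetric] g_integrable) auto

lemma primitive_nonneg: "0 \<le> X v"
  unfolding set_lebesgue_integral_def using g_nonneg by (intro integral_nonneg_AE) auto

lemma primitive_mono: "v \<le> w \<Longrightarrow> X v \<le> X w"
  using nn_set_integral_set_mono[of "{0..v}" "{0..w}" lborel "\<lambda>r. ennreal (g r)"] primitive_nonneg[of w]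
  by (simp add: ennreal_primitive[symmetric])

private lemma primitive_continuous: "continuous_on UNIV X"
  using integrable_mult_indicator[OF _ g_integrable]
  by (intro continuous_on_LBINT) (auto simp: set_integrable_def)

private lemma primitive_0: "X 0 = 0"
  using ennreal_primitive[of 0] primitive_nonneg[of 0] by simp

private lemma primitive_measurable[measurable]: "X \<in> borel_measurable borel"
  using primitive_continuous by (intro borel_measurable_continuous_onI) auto

private lemma nn_integral_total: "(\<integral>\<^sup>+r. g r \<partial>lborel) = ennreal (X T)"
  unfolding ennreal_primitive using g_vanishes
  by (intro nn_integral_cong) (auto simp: indicator_def)

private lemma primitive_last_level:
  assumes "0 \<le> x" "x < X T"
  shows "\<exists>s\<in>{0..T}. X s = x \<and> (\<forall>q\<in>{0..T}. X q \<le> x \<longleftrightarrow> q \<le> s)"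
proof -
  define S where "S = {0..T} \<inter> X -` {..x}"
  have "compact S"
    unfolding S_def using primitive_continuous
    by (intro compact_Int_closed continuous_closed_vimage) (auto simp: continuous_on_eq_continuous_at)
  moreover have "0 \<in> S" unfolding S_def using T_nonneg assms primitive_0 by auto
  ultimately obtain s where s: "s \<in> S" "\<And>r. r \<in> S \<Longrightarrow> r \<le> s"
    using continuous_attains_sup[of S "\<lambda>r. r"] by auto
  obtain r where r: "s \<le> r" "r \<le> T" "X r = x"
    using s(1) assms IVT'[of X s x T] continuous_on_subset[OF primitive_continuous]
    unfolding S_def by auto
  then have "r = s" using s by (intro antisym) (auto simp: S_def)
  then have "X s = x" using r by simp
  moreover have "X q \<le> x \<longleftrightarrow> q \<le> s" if "q \<in> {0..T}" for q
    using that s(2)[of q] primitive_mono[of q s] \<open>X s = x\<close> unfolding S_def by auto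
  ultimately show ?thesis using s(1) by (auto simp: S_def)
qed

lemma emeasure_density_primitive_vimage_atMost:
  "emeasure (density lborel g) (X -` {..x}) = ennreal (min (max x 0) (X T))"
proof -
  have emeasure_eq: "emeasure (density lborel g) (X -` {..x}) = (\<integral>\<^sup>+r\<in>X -` {..x}. g r \<partial>lborel)"
    by (intro emeasure_density) (auto intro: measurable_sets_borel[OF primitive_measurable])
  consider "x < 0" | "X T \<le> x" | "0 \<le> x" "x < X T" by linarith
  then show ?thesis
  proof cases
    case 1
    then have "X -` {..x} = {}" by (auto dest!: order.trans[OF primitive_nonneg])
    then show ?thesis using 1 primitive_nonneg[of T] by (simp add: emeasure_eq min_def)
  next
    case 2
    have "(\<integral>\<^sup>+r\<in>X -` {..x}. g r \<partial>lborel) = (\<integral>\<^sup>+r. g r \<partial>lborel)"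
    proof (intro nn_integral_cong)
      fix q
      have "q \<in> {0..T} \<Longrightarrow> X q \<le> x" using 2 primitive_mono[of q T] by auto
      then show "ennreal (g q) * indicator (X -` {..x}) q = ennreal (g q)"
        using g_vanishes[of q] by (cases "q \<in> {0..T}") (auto simp: indicator_def)
    qed
    then show ?thesis using 2 primitive_nonneg[of T] by (simp add: emeasure_eq nn_integral_total)
  next
    case 3
    then obtain s where "s \<in> {0..T}" "X s = x" and below: "\<And>q. q \<in> {0..T} \<Longrightarrow> X q \<le> x \<longleftrightarrow> q \<le> s"
      using primitive_last_level[OF 3] by blast
    have "(\<integral>\<^sup>+r\<in>X -` {..x}. g r \<partial>lborel) = (\<integral>\<^sup>+r\<in>{0..s}. g r \<partial>lborel)"
    proof (intro nn_integral_cong)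
      fix q
      show "ennreal (g q) * indicator (X -` {..x}) q = ennreal (g q) * indicator {0..s} q"
        using g_vanishes[of q] below[of q] \<open>s \<in> {0..T}\<close> by (cases "q \<in> {0..T}") (auto simp: indicator_def)
    qed
    then show ?thesis using 3 \<open>X s = x\<close> by (simp add: emeasure_eq ennreal_primitive[symmetric] min_def)
  qed
qed

lemma distr_density_primitive:
  "distr (density lborel g) borel X = density lborel (indicator {0..X T})"
proof (rule cdf_unique')
  let ?M1 = "distr (density lborel g) borel X" and ?M2 = "density lborel (indicator {0..X T})"
  have emeasure_M1: "emeasure ?M1 A = emeasure (density lborel g) (X -` A)" if "A \<in> sets borel" for A
    using that by (simp add: emeasure_distr)
  have emeasure_M2: "emeasure ?M2 A = emeasure lborel ({0..X T} \<inter> A)" if "A \<in> sets borel" for A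
  proof -
    have "emeasure ?M2 A = (\<integral>\<^sup>+s. indicator {0..X T} s * indicator A s \<partial>lborel)"
      using that by (subst emeasure_density) auto
    also have "\<dots> = (\<integral>\<^sup>+s. indicator ({0..X T} \<inter> A) s \<partial>lborel)"
      by (intro nn_integral_cong) (simp add: indicator_inter_arith)
    finally show ?thesis using that by simp
  qed
  have "emeasure ?M1 UNIV \<noteq> \<infinity>"
    using emeasure_density_primitive_vimage_atMost[of "X T"] primitive_nonneg[of T]
    by (simp add: emeasure_M1[of UNIV] emeasure_density nn_integral_total)
  then show "finite_borel_measure ?M1"
    by (intro finite_borel_measure.intro finite_measureI) (auto simp: finite_borel_measure_axioms_def)
  have "emeasure ?M2 UNIV \<noteq> \<infinity>"
    using primitive_nonneg[of T] by (simp add: emeasure_M2)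
  then show "finite_borel_measure ?M2"
    by (intro finite_borel_measure.intro finite_measureI) (auto simp: finite_borel_measure_axioms_def)
  have "emeasure ?M1 {..x} = emeasure ?M2 {..x}" for x
  proof -
    have "{0..X T} \<inter> {..x} = {0..min x (X T)}" by auto
    then show ?thesis
      using primitive_nonneg[of T]
      by (cases "x < 0") (auto simp: emeasure_M1 emeasure_M2 emeasure_density_primitive_vimage_atMost min_def max_def)
  qed
  then show "cdf ?M1 = cdf ?M2"
    unfolding cdf_def measure_def by simp
qed

lemma nn_integral_primitive_change_var:
  fixes f :: "real \<Rightarrow> ennreal"
  assumes f: "f \<in> borel_measurable borel"
  shows "(\<integral>\<^sup>+r. g r * f (X r) \<partial>lborel) = (\<integral>\<^sup>+s\<in>{0..X T}. f s \<partial>lborel)"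
proof -
  have "(\<integral>\<^sup>+r. g r * f (X r) \<partial>lborel) = (\<integral>\<^sup>+s. f s \<partial>distr (density lborel g) borel X)"
    using f by (simp add: nn_integral_distr nn_integral_density)
  also have "\<dots> = (\<integral>\<^sup>+s\<in>{0..X T}. f s \<partial>lborel)"
    using f by (simp add: distr_density_primitive nn_integral_density mult.commute)
  finally show ?thesis .
qed

end

lemma set_integral_truncate:
  fixes \<eta> :: "real \<Rightarrow> real"
  assumes "v \<le> T"
  shows "(LINT r:{0..v}|lborel. \<eta> r * indicator {0..T} r) = (LINT r:{0..v}|lborel. \<eta> r)"
  using assms by (intro set_lebesgue_integral_cong) (auto simp: indicator_def)

lemma truncation_nonneg_integrable:
  fixes \<eta> :: "real \<Rightarrow> real"
  assumes "\<And>r. r \<in> {0..T} \<Longrightarrow> 0 \<le> \<eta> r" and "set_integrable lborel {0..T} \<eta>"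
  shows "\<And>r. 0 \<le> \<eta> r * indicator {0..T} r" and "integrable lborel (\<lambda>r. \<eta> r * indicator {0..T} r)"
    and "\<And>r. r \<notin> {0..T} \<Longrightarrow> \<eta> r * indicator {0..T} r = 0"
  using assms by (auto simp: indicator_def set_integrable_def mult.commute)

lemma traj_antimono:
  assumes "\<And>r. r \<in> {0..t} \<Longrightarrow> 0 \<le> \<eta> r" and "set_integrable lborel {0..t} \<eta>"
    and "0 \<le> s" and "s \<le> t"
  shows "traj y \<eta> t \<le> traj y \<eta> s" and "traj y \<eta> s \<le> y"
proof -
  let ?g = "\<lambda>r. \<eta> r * indicator {0..t} r"
  note g = truncation_nonneg_integrable[OF assms(1,2)]
  have "0 \<le> (LINT r:{0..s}|lborel. ?g r)" "(LINT r:{0..s}|lborel. ?g r) \<le> (LINT r:{0..t}|lborel. ?g r)"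
    using primitive_nonneg[of ?g t s] primitive_mono[of ?g t s t] g assms by auto
  then show "traj y \<eta> t \<le> traj y \<eta> s" and "traj y \<eta> s \<le> y"
    using assms by (auto simp: traj_def set_integral_truncate)
qed

lemma nn_integral_traj_change_var:
  fixes f :: "real \<Rightarrow> ennreal"
  assumes "0 \<le> T" and \<eta>_nonneg: "\<And>r. r \<in> {0..T} \<Longrightarrow> 0 \<le> \<eta> r"
    and \<eta>_integrable: "set_integrable lborel {0..T} \<eta>" and f[measurable]: "f \<in> borel_measurable borel"
  shows "(\<integral>\<^sup>+r\<in>{0..T}. \<eta> r * f (traj y \<eta> r) \<partial>lborel) = (\<integral>\<^sup>+u\<in>{traj y \<eta> T..y}. f u \<partial>lborel)"
proof -
  let ?g = "\<lambda>r. \<eta> r * indicator {0..T} r"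
  let ?X = "\<lambda>v. LINT r:{0..v}|lborel. ?g r"
  note g = truncation_nonneg_integrable[OF \<eta>_nonneg \<eta>_integrable]
  have "(\<integral>\<^sup>+r\<in>{0..T}. \<eta> r * f (traj y \<eta> r) \<partial>lborel) = (\<integral>\<^sup>+r. ?g r * f (y - ?X r) \<partial>lborel)"
  proof (intro nn_integral_cong)
    fix r
    show "ennreal (\<eta> r) * f (traj y \<eta> r) * indicator {0..T} r = ennreal (?g r) * f (y - ?X r)"
      by (cases "r \<in> {0..T}") (simp_all add: traj_def set_integral_truncate)
  qed
  also have "\<dots> = (\<integral>\<^sup>+s\<in>{0..?X T}. f (y - s) \<partial>lborel)"
    using g \<open>0 \<le> T\<close> by (intro nn_integral_primitive_change_var) auto
  also have "\<dots> = (\<integral>\<^sup>+u\<in>{y - ?X T..y}. f u \<partial>lborel)"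
    by (subst nn_integral_real_affine[where c="-1" and t=y]) (auto simp: indicator_def intro!: nn_integral_cong)
  finally show ?thesis by (simp add: traj_def set_integral_truncate)
qed

lemma nn_integral_Icc_SUP:
  fixes a :: "nat \<Rightarrow> real" and f :: "real \<Rightarrow> ennreal"
  assumes "decseq a" and a_nonneg: "\<And>n. 0 \<le> a n" and a_lim: "a \<longlonglongrightarrow> 0"
    and [measurable]: "f \<in> borel_measurable borel"
  shows "(\<integral>\<^sup>+u\<in>{0..y}. f u \<partial>lborel) = (SUP n. \<integral>\<^sup>+u\<in>{a n..y}. f u \<partial>lborel)"
proof -
  have SUP_eq: "(SUP n. f u * indicator {a n..y} u) = f u * indicator {0..y} u" if "u \<noteq> 0" for u
  proof (rule antisym)
    show "(SUP n. f u * indicator {a n..y} u) \<le> f u * indicator {0..y} u"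
      using a_nonneg by (intro SUP_least) (auto simp: indicator_def intro: order_trans)
    show "f u * indicator {0..y} u \<le> (SUP n. f u * indicator {a n..y} u)"
    proof (cases "u \<in> {0..y}")
      case True
      then have "0 < u" using that by auto
      then obtain n where "a n < u"
        using order_tendstoD(2)[OF a_lim \<open>0 < u\<close>] by (auto simp: eventually_sequentially)
      then show ?thesis using True by (intro SUP_upper2[of n]) (auto simp: indicator_def)
    qed simp
  qed
  have a_Suc: "a (Suc n) \<le> a n" for n
    using \<open>decseq a\<close> by (simp add: decseq_SucD)
  have "incseq (\<lambda>n u. f u * indicator {a n..y} u)"
    by (intro incseq_SucI le_funI mult_left_mono indicator_leI) (auto intro: order_trans[OF a_Suc])
  then have "(SUP n. \<integral>\<^sup>+u\<in>{a n..y}. f u \<partial>lborel) = (\<integral>\<^sup>+u. (SUP n. f u * indicator {a n..y} u) \<partial>lborel)"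
    by (intro nn_integral_monotone_convergence_SUP[symmetric]) auto
  also have "\<dots> = (\<integral>\<^sup>+u\<in>{0..y}. f u \<partial>lborel)"
    using AE_lborel_singleton[of 0] by (intro nn_integral_cong_AE) (auto simp: SUP_eq elim!: eventually_mono)
  finally show ?thesis ..
qed

lemma nn_integral_atLeast_SUP:
  fixes g :: "real \<Rightarrow> ennreal"
  assumes [measurable]: "(\<lambda>x. g x * indicator {0..} x) \<in> borel_measurable borel"
  shows "(\<integral>\<^sup>+x\<in>{0..}. g x \<partial>lborel) = (SUP n::nat. \<integral>\<^sup>+x\<in>{0..real n}. g x \<partial>lborel)"
proof -
  have indicator_SUP: "(SUP n::nat. indicator {0..real n} x) = (indicator {0..} x :: ennreal)" for x :: real
  proof (cases "0 \<le> x")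
    case True
    obtain n :: nat where "x \<le> real n" using real_arch_simple by blast
    then show ?thesis using True by (intro antisym SUP_least SUP_upper2[of n]) (auto simp: indicator_def)
  qed simp
  have eq: "g x * indicator {0..real n} x = (g x * indicator {0..} x) * indicator {0..real n} x" for x n
    by (auto simp: indicator_def)
  have "(\<integral>\<^sup>+x\<in>{0..}. g x \<partial>lborel) = (\<integral>\<^sup>+x. (SUP n::nat. g x * indicator {0..real n} x) \<partial>lborel)"
    by (simp add: indicator_SUP flip: SUP_mult_left_ennreal)
  also have "\<dots> = (SUP n::nat. \<integral>\<^sup>+x\<in>{0..real n}. g x \<partial>lborel)"
    unfolding eq by (intro nn_integral_monotone_convergence_SUP incseq_SucI le_funI mult_left_mono indicator_leI) auto
  finally show ?thesis .
qed

lemma emeasure_lborel_atLeast: "emeasure lborel {a::real..} = \<infinity>"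
proof (rule ccontr)
  assume "emeasure lborel {a..} \<noteq> \<infinity>"
  then obtain r where r: "emeasure lborel {a..} = ennreal r" "0 \<le> r"
    using ennreal_cases[of "emeasure lborel {a..}"] by auto
  have "emeasure lborel {a..a + r + 1} \<le> emeasure lborel {a..}"
    by (intro emeasure_mono) auto
  then show False using r by (simp add: ennreal_le_iff)
qed

lemma not_set_integrable_atLeast:
  fixes f :: "real \<Rightarrow> real"
  assumes "0 < \<epsilon>" and "0 \<le> T" and "\<And>t. T \<le> t \<Longrightarrow> \<epsilon> \<le> \<bar>f t\<bar>"
  shows "\<not> set_integrable lborel {0..} f"
proof
  assume "set_integrable lborel {0..} f"
  then have "(\<integral>\<^sup>+t. norm (indicator {0..} t *\<^sub>R f t) \<partial>lborel) < \<infinity>"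
    by (simp add: set_integrable_def integrable_iff_bounded)
  moreover have "(\<integral>\<^sup>+t. ennreal \<epsilon> * indicator {T..} t \<partial>lborel) \<le> (\<integral>\<^sup>+t. norm (indicator {0..} t *\<^sub>R f t) \<partial>lborel)"
    using assms by (intro nn_integral_mono) (auto simp: indicator_def)
  ultimately show False
    using \<open>0 < \<epsilon>\<close> by (simp add: nn_integral_cmult_indicator emeasure_lborel_atLeast ennreal_mult_top)
qed

section \<open>Admissible trajectories\<close>

lemma antimono_tendsto_0:
  fixes Y :: "real \<Rightarrow> real"
  assumes antimono: "\<And>s t. 0 \<le> s \<Longrightarrow> s \<le> t \<Longrightarrow> Y t \<le> Y s"
    and not_away: "\<And>\<epsilon> T. 0 < \<epsilon> \<Longrightarrow> 0 \<le> T \<Longrightarrow> \<exists>t\<ge>T. \<bar>Y t\<bar> < \<epsilon>"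
  shows "(Y \<longlongrightarrow> 0) at_top"
proof (rule order_tendstoI)
  fix b :: real assume "0 < b"
  then obtain t0 where "t0 \<ge> 0" "\<bar>Y t0\<bar> < b" using not_away[of b 0] by auto
  then have "Y t < b" if "t0 \<le> t" for t
    using antimono[of t0 t] that by linarith
  then show "eventually (\<lambda>t. Y t < b) at_top"
    by (auto simp: eventually_at_top_linorder)
next
  fix a :: real assume "a < 0"
  have "a < Y T" if "0 \<le> T" for T
  proof (rule ccontr)
    assume "\<not> a < Y T"
    then have "- a \<le> \<bar>Y t\<bar>" if "T \<le> t" for t
      using antimono[OF \<open>0 \<le> T\<close> that] \<open>a < 0\<close> by linarith
    then show False using not_away[of "- a" T] \<open>a < 0\<close> that by fastforce
  qed
  then show "eventually (\<lambda>t. a < Y t) at_top"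
    by (auto simp: eventually_at_top_linorder)
qed

lemma antimono_tendsto_0_nonneg:
  fixes Y :: "real \<Rightarrow> real"
  assumes "\<And>s t. 0 \<le> s \<Longrightarrow> s \<le> t \<Longrightarrow> Y t \<le> Y s" and "(Y \<longlongrightarrow> 0) at_top" and "0 \<le> t"
  shows "0 \<le> Y t"
  using assms by (intro tendsto_upperbound[of Y 0 at_top]) (auto simp: eventually_at_top_linorder)

context
  fixes \<eta> :: "real \<Rightarrow> real"
  assumes \<eta>_nonneg: "\<And>t. 0 \<le> t \<Longrightarrow> 0 \<le> \<eta> t"
    and \<eta>_integrable: "\<And>t. 0 \<le> t \<Longrightarrow> set_integrable lborel {0..t} \<eta>"
begin

lemma traj_antimono_atLeast: "0 \<le> s \<Longrightarrow> s \<le> t \<Longrightarrow> traj y \<eta> t \<le> traj y \<eta> s"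
  using traj_antimono(1)[of t \<eta> s y] \<eta>_nonneg \<eta>_integrable by auto

lemma traj_le_start: "0 \<le> t \<Longrightarrow> traj y \<eta> t \<le> y"
  using traj_antimono(2)[of t \<eta> t y] \<eta>_nonneg \<eta>_integrable by auto

lemma borel_measurable_restrict_atLeast: "(\<lambda>t. \<eta> t * indicator {0..} t) \<in> borel_measurable borel"
proof (rule borel_measurable_LIMSEQ_real)
  show "(\<lambda>t. \<eta> t * indicator {0..real n} t) \<in> borel_measurable borel" for n
    using borel_measurable_integrable[OF \<eta>_integrable[of "real n", unfolded set_integrable_def]]
    by (simp add: mult.commute)
  fix t :: real
  obtain N :: nat where "t \<le> real N" using real_arch_simple by blast
  then have "\<forall>n\<ge>N. \<eta> t * indicator {0..real n} t = \<eta> t * indicator {0..} t"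
    by (auto simp: indicator_def)
  then show "(\<lambda>n. \<eta> t * indicator {0..real n} t) \<longlonglongrightarrow> \<eta> t * indicator {0..} t"
    by (intro tendsto_eventually) (auto simp: eventually_sequentially)
qed

lemma borel_measurable_traj: "(\<lambda>t. traj y \<eta> (max 0 t)) \<in> borel_measurable borel"
  by (intro borel_measurable_antimono antimonoI traj_antimono_atLeast) auto

lemma nn_integral_traj_change_var_atLeast:
  fixes f :: "real \<Rightarrow> ennreal"
  assumes lim: "(traj y \<eta> \<longlongrightarrow> 0) at_top" and [measurable]: "f \<in> borel_measurable borel"
  shows "(\<integral>\<^sup>+r\<in>{0..}. \<eta> r * f (traj y \<eta> r) \<partial>lborel) = (\<integral>\<^sup>+u\<in>{0..y}. f u \<partial>lborel)"
proof -
  note [measurable] = borel_measurable_restrict_atLeast borel_measurable_traj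
  have "(\<lambda>r. ennreal (\<eta> r) * f (traj y \<eta> r) * indicator {0..} r)
      = (\<lambda>r. ennreal (\<eta> r * indicator {0..} r) * f (traj y \<eta> (max 0 r)) * indicator {0..} r)"
    by (auto simp: indicator_def fun_eq_iff)
  also have "\<dots> \<in> borel_measurable borel"
    by measurable
  finally have "(\<integral>\<^sup>+r\<in>{0..}. \<eta> r * f (traj y \<eta> r) \<partial>lborel)
      = (SUP n::nat. \<integral>\<^sup>+r\<in>{0..real n}. \<eta> r * f (traj y \<eta> r) \<partial>lborel)"
    by (rule nn_integral_atLeast_SUP)
  also have "\<dots> = (SUP n::nat. \<integral>\<^sup>+u\<in>{traj y \<eta> (real n)..y}. f u \<partial>lborel)"
    using \<eta>_nonneg \<eta>_integrable by (intro SUP_cong refl nn_integral_traj_change_var) auto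
  also have "\<dots> = (\<integral>\<^sup>+u\<in>{0..y}. f u \<partial>lborel)"
  proof (rule nn_integral_Icc_SUP[symmetric])
    show "decseq (\<lambda>n. traj y \<eta> (real n))"
      by (intro decseq_SucI traj_antimono_atLeast) auto
    show "0 \<le> traj y \<eta> (real n)" for n
      using lim by (intro antimono_tendsto_0_nonneg[of "traj y \<eta>"] traj_antimono_atLeast) auto
    show "(\<lambda>n. traj y \<eta> (real n)) \<longlonglongrightarrow> 0"
      using filterlim_compose[OF lim filterlim_real_sequentially] .
  qed simp
  finally show ?thesis .
qed

end

lemma admissible_speed:
  assumes "admissible m y \<eta>"
  shows "\<And>t. 0 \<le> t \<Longrightarrow> 0 \<le> \<eta> t" and "\<And>t. 0 \<le> t \<Longrightarrow> set_integrable lborel {0..t} \<eta>"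
  using assms by (auto simp: admissible_def)

lemma admissible_traj_tendsto_0:
  assumes adm: "admissible m y \<eta>"
  shows "(traj y \<eta> \<longlongrightarrow> 0) at_top"
proof (rule antimono_tendsto_0)
  show "traj y \<eta> t \<le> traj y \<eta> s" if "0 \<le> s" "s \<le> t" for s t
    using traj_antimono_atLeast[OF admissible_speed[OF adm] that] .
  fix \<epsilon> T :: real assume "0 < \<epsilon>" "0 \<le> T"
  show "\<exists>t\<ge>T. \<bar>traj y \<eta> t\<bar> < \<epsilon>"
  proof (rule ccontr)
    assume "\<not> ?thesis"
    then have away: "\<And>t. T \<le> t \<Longrightarrow> \<epsilon> \<le> \<bar>traj y \<eta> t\<bar>" by (auto simp: not_less)
    have "\<not> set_integrable lborel {0..} (\<lambda>t. \<bar>traj y \<eta> t\<bar>)"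
      using \<open>0 < \<epsilon>\<close> \<open>0 \<le> T\<close> away by (intro not_set_integrable_atLeast) auto
    moreover have "\<epsilon>\<^sup>2 \<le> \<bar>(traj y \<eta> t)\<^sup>2\<bar>" if "T \<le> t" for t
      using power_mono[OF away[OF that], of 2] \<open>0 < \<epsilon>\<close> by simp
    then have "\<not> set_integrable lborel {0..} (\<lambda>t. (traj y \<eta> t)\<^sup>2)"
      using \<open>0 < \<epsilon>\<close> \<open>0 \<le> T\<close> by (intro not_set_integrable_atLeast[of "\<epsilon>\<^sup>2" T]) auto
    ultimately show False using adm by (auto simp: admissible_def split: if_splits)
  qed
qed

section \<open>The inverse \<open>G\<close> of \<open>x\<^sup>2 F'(x)\<close>\<close>

locale impact_function =
  fixes F :: "real \<Rightarrow> real"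
  assumes F_nonneg: "\<forall>x\<ge>0. 0 \<le> F x"
    and F_cont: "continuous_on {0..} F"
    and F_diff: "\<forall>x>0. F differentiable (at x)"
    and F'_cont: "continuous_on {0<..} (deriv F)"
    and F_zero: "F 0 = 0"
    and F_conv: "strictly_convex_on {0..} (\<lambda>x. x * F x)"
    and F_mono: "strict_mono_on {0<..} (\<lambda>x. x\<^sup>2 * deriv F x)"
    and F_lim: "filterlim (\<lambda>x. x\<^sup>2 * deriv F x) at_top at_top"
begin

definition hF :: "real \<Rightarrow> real" where "hF x = x\<^sup>2 * deriv F x"

lemma F_has_deriv: "0 < x \<Longrightarrow> (F has_real_derivative deriv F x) (at x)"
  using F_diff DERIV_deriv_iff_real_differentiable by blast

lemma hF_less: "0 < x1 \<Longrightarrow> x1 < x2 \<Longrightarrow> hF x1 < hF x2"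
  using F_mono unfolding hF_def by (auto intro: strict_mono_onD)

text \<open>Otherwise \<open>(F x + w / x)' = (hF x - w) / x\<^sup>2 \<ge> 0\<close> on \<open>(0, 1]\<close>, which is impossible since
  \<open>w / x\<close> blows up at \<open>0\<close> while \<open>F \<ge> 0\<close>.\<close>

lemma hF_small: assumes "0 < w" shows "\<exists>x>0. hF x < w"
proof (rule ccontr)
  assume "\<not> ?thesis"
  then have hw: "\<And>x. 0 < x \<Longrightarrow> w \<le> hF x" by force
  define q where "q x = F x + w / x" for x
  define x0 where "x0 = w / (F 1 + w + 1)"
  have F1: "0 \<le> F 1" using F_nonneg by auto
  have x0: "0 < x0" "x0 \<le> 1" using \<open>0 < w\<close> F1 by (auto simp: x0_def field_simps)
  have "q x0 \<le> q 1"
  proof (rule DERIV_nonneg_imp_nondecreasing[OF x0(2)])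
    fix x assume "x0 \<le> x" "x \<le> 1"
    then have "0 < x" using x0 by auto
    have "(q has_real_derivative deriv F x - w / x\<^sup>2) (at x)"
      unfolding q_def using \<open>0 < x\<close>
      by (auto intro!: derivative_eq_intros F_has_deriv simp: power2_eq_square field_simps)
    moreover have "0 \<le> deriv F x - w / x\<^sup>2"
      using hw[OF \<open>0 < x\<close>] \<open>0 < x\<close> by (simp add: hF_def field_simps)
    ultimately show "\<exists>y. (q has_real_derivative y) (at x) \<and> 0 \<le> y" by blast
  qed
  moreover have "w / x0 = F 1 + w + 1" using \<open>0 < w\<close> F1 by (simp add: x0_def field_simps)
  moreover have "0 \<le> F x0" using F_nonneg x0 by auto
  ultimately show False by (simp add: q_def)
qed

lemma hF_large: "\<exists>x>0. w < hF x"
proof -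
  have "eventually (\<lambda>x. w + 1 \<le> hF x) at_top"
    using F_lim unfolding hF_def filterlim_at_top by blast
  then obtain N where N: "\<And>x. x \<ge> N \<Longrightarrow> w + 1 \<le> hF x" by (auto simp: eventually_at_top_linorder)
  show ?thesis using N[of "max N 1"] by (intro exI[of _ "max N 1"]) auto
qed

lemma hF_bij: assumes "0 < w" shows "\<exists>!x. 0 < x \<and> hF x = w"
proof -
  obtain x0 where x0: "0 < x0" "hF x0 < w" using hF_small[OF assms] by auto
  obtain x1 where x1: "0 < x1" "w < hF x1" using hF_large by auto
  have "x0 < x1"
    using x0 x1 hF_less[of x1 x0] by (cases "x0 < x1") (auto simp: not_less le_less)
  moreover have "continuous_on {x0..x1} hF"
    unfolding hF_def using x0 by (intro continuous_intros continuous_on_subset[OF F'_cont]) auto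
  ultimately obtain x where "x0 \<le> x" "hF x = w"
    using x0 x1 IVT'[of hF x0 w x1] by auto
  moreover have "x1 = x2" if "0 < x1" "0 < x2" "hF x1 = hF x2" for x1 x2
    using that hF_less[of x1 x2] hF_less[of x2 x1] by (cases x1 x2 rule: linorder_cases) auto
  ultimately show ?thesis using x0 by (intro ex1I[of _ x]) auto
qed

lemma invG_pos: "0 < w \<Longrightarrow> 0 < invG F w"
  and hF_invG: "0 < w \<Longrightarrow> hF (invG F w) = w"
  using theI'[OF hF_bij[of w]] by (simp_all add: invG_def hF_def)

lemma invG_nonpos: "w \<le> 0 \<Longrightarrow> invG F w = 0"
  by (simp add: invG_def)

lemma invG_nonneg: "0 \<le> invG F w"
  using invG_pos[of w] invG_nonpos[of w] by (cases "0 < w") auto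

lemma invG_mono: "mono (invG F)"
proof
  fix w1 w2 :: real assume "w1 \<le> w2"
  show "invG F w1 \<le> invG F w2"
  proof (cases "w1 \<le> 0")
    case False
    then have "0 < w1" "0 < w2" using \<open>w1 \<le> w2\<close> by auto
    show ?thesis
    proof (rule ccontr)
      assume "\<not> ?thesis"
      then have "hF (invG F w2) < hF (invG F w1)"
        using invG_pos[OF \<open>0 < w2\<close>] by (intro hF_less) auto
      then show False using hF_invG \<open>0 < w1\<close> \<open>0 < w2\<close> \<open>w1 \<le> w2\<close> by simp
    qed
  qed (simp add: invG_nonneg invG_nonpos)
qed

lemma convex_on_xF: "convex_on {0..} (\<lambda>x. x * F x)"
proof (rule convex_onI)
  fix t x z :: real assume "0 < t" "t < 1" "x \<in> {0..}" "z \<in> {0..}"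
  then show "((1 - t) *\<^sub>R x + t *\<^sub>R z) * F ((1 - t) *\<^sub>R x + t *\<^sub>R z) \<le> (1 - t) * (x * F x) + t * (z * F z)"
    using F_conv unfolding strictly_convex_on_def
    by (cases "x = z") (simp add: algebra_simps, auto intro: less_imp_le)
qed simp

lemma xF_midpoint_less:
  assumes "0 \<le> a" "0 \<le> b" "a \<noteq> b"
  shows "((a + b) / 2) * F ((a + b) / 2) < (a * F a + b * F b) / 2"
proof -
  have "\<forall>t. 0 < t \<and> t < 1 \<longrightarrow> ((1 - t) * a + t * b) * F ((1 - t) * a + t * b) < (1 - t) * (a * F a) + t * (b * F b)"
    using F_conv assms unfolding strictly_convex_on_def by simp
  from this[rule_format, of "1/2"] show ?thesis by (simp add: field_simps)
qed

end

section \<open>The optimal feedback\<close>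

text \<open>The parameter \<open>m\<close> only selects the integrability condition in \<open>admissible\<close>; the growth
  assumption on \<open>K\<close> matching it is what makes the optimal trajectory admissible.\<close>

locale execution_problem = impact_function +
  fixes K :: "real \<Rightarrow> real" and A y m :: real
  assumes A_pos: "0 < A" and y_nonneg: "0 \<le> y"
    and K_0: "K 0 = 0" and K_pos: "\<And>u. 0 < u \<Longrightarrow> 0 < K u"
    and K_mono: "\<And>u v. 0 \<le> u \<Longrightarrow> u \<le> v \<Longrightarrow> K u \<le> K v"
    and K_linear_growth: "m \<noteq> 0 \<Longrightarrow> \<exists>a>0. \<forall>u\<in>{0..y}. a * u \<le> K u"
    and K_quadratic_growth: "m = 0 \<Longrightarrow> \<exists>b>0. \<forall>u\<in>{0..y}. b * u\<^sup>2 \<le> K u"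
begin

definition speed :: "real \<Rightarrow> real" where "speed u = invG F (K u / A)"

definition unit_cost :: "real \<Rightarrow> real" where "unit_cost u = K u / speed u + A * F (speed u)"

definition excess :: "real \<Rightarrow> real \<Rightarrow> real" where
  "excess \<xi> u = K u + A * \<xi> * F \<xi> - \<xi> * unit_cost u"

lemma K_nonneg: "0 \<le> u \<Longrightarrow> 0 \<le> K u"
  using K_mono[of 0 u] K_0 by simp

lemma speed_0: "speed 0 = 0"
  by (simp add: speed_def K_0 invG_nonpos)

text \<open>Here \<open>K 0 / speed 0 = 0 / 0 = 0\<close> by Isabelle's division convention.\<close>

lemma unit_cost_0: "unit_cost 0 = 0"
  by (simp add: unit_cost_def speed_0 F_zero)

lemma speed_nonneg: "0 \<le> speed u"
  by (simp add: speed_def invG_nonneg)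

lemma speed_pos: "0 < u \<Longrightarrow> 0 < speed u"
  unfolding speed_def using K_pos A_pos by (intro invG_pos) auto

lemma speed_mono: "0 \<le> u \<Longrightarrow> u \<le> v \<Longrightarrow> speed u \<le> speed v"
  unfolding speed_def using K_mono A_pos by (intro monoD[OF invG_mono] divide_right_mono) auto

lemma hF_speed: "0 < u \<Longrightarrow> hF (speed u) = K u / A"
  using hF_invG[of "K u / A"] K_pos A_pos unfolding speed_def by auto

lemma excess_speed: "0 \<le> u \<Longrightarrow> excess (speed u) u = 0"
proof (cases "u = 0")
  case False
  assume "0 \<le> u"
  then have "speed u \<noteq> 0" using False speed_pos[of u] by simp
  then have "speed u * (K u / speed u) = K u" by simp
  then show ?thesis by (simp add: excess_def unit_cost_def algebra_simps)
qed (simp add: excess_def unit_cost_0 speed_0 K_0)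

lemma excess_nonneg:
  assumes "0 \<le> u" and "0 \<le> \<xi>"
  shows "0 \<le> excess \<xi> u"
proof (cases "u = 0")
  case True
  then show ?thesis using F_nonneg assms A_pos by (simp add: excess_def unit_cost_0 K_0)
next
  case False
  define p where "p = speed u"
  have "0 < p" using speed_pos assms False by (simp add: p_def)
  have hp: "A * (p\<^sup>2 * deriv F p) = K u"
    using hF_speed[of u] assms False A_pos by (simp add: p_def hF_def)
  have hp': "A * (p * (\<xi> * deriv F p)) = \<xi> * (K u / p)"
    using hp \<open>0 < p\<close> by (simp add: field_simps power2_eq_square)
  have "((\<lambda>x. x * F x) has_real_derivative (F p + p * deriv F p)) (at p)"
    using DERIV_mult[OF DERIV_ident F_has_deriv[OF \<open>0 < p\<close>]] by (simp add: algebra_simps)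
  then have "(F p + p * deriv F p) * (\<xi> - p) \<le> \<xi> * F \<xi> - p * F p"
    using convex_on_imp_above_tangent[OF convex_on_xF, of p] \<open>0 < p\<close> assms
    by (simp add: is_interval_connected has_field_derivative_at_within)
  then have "A * (p * F p + (F p + p * deriv F p) * (\<xi> - p)) \<le> A * (\<xi> * F \<xi>)"
    using A_pos by (intro mult_left_mono) auto
  then have "A * F p * \<xi> + (K u / p) * \<xi> - K u \<le> A * (\<xi> * F \<xi>)"
    using hp hp' by (simp add: algebra_simps power2_eq_square)
  then show ?thesis
    unfolding excess_def unit_cost_def p_def[symmetric] by (simp add: algebra_simps)
qed

lemma excess_eq_0_imp_speed:
  assumes "0 \<le> u" and "0 \<le> \<xi>" and "excess \<xi> u = 0"
  shows "\<xi> = speed u"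
proof (rule ccontr)
  assume ne: "\<xi> \<noteq> speed u"
  have "A * (((\<xi> + speed u) / 2) * F ((\<xi> + speed u) / 2)) < A * ((\<xi> * F \<xi> + speed u * F (speed u)) / 2)"
    using xF_midpoint_less[OF \<open>0 \<le> \<xi>\<close> speed_nonneg ne] A_pos by simp
  moreover have "excess ((\<xi> + speed u) / 2) u
      = K u + A * (((\<xi> + speed u) / 2) * F ((\<xi> + speed u) / 2)) - ((\<xi> + speed u) / 2) * unit_cost u"
    by (simp add: excess_def)
  moreover have "(excess \<xi> u + excess (speed u) u) / 2
      = K u + A * ((\<xi> * F \<xi> + speed u * F (speed u)) / 2) - ((\<xi> + speed u) / 2) * unit_cost u"
    unfolding excess_def by (simp add: algebra_simps add_divide_distrib diff_divide_distrib)
  ultimately have "excess ((\<xi> + speed u) / 2) u < (excess \<xi> u + excess (speed u) u) / 2"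
    by linarith
  then show False
    using excess_nonneg[OF \<open>0 \<le> u\<close>, of "(\<xi> + speed u) / 2"] \<open>0 \<le> \<xi>\<close> speed_nonneg[of u]
      assms(3) excess_speed[OF \<open>0 \<le> u\<close>] by simp
qed

lemma unit_cost_nonneg: "0 \<le> u \<Longrightarrow> 0 \<le> unit_cost u"
  unfolding unit_cost_def using K_nonneg speed_nonneg F_nonneg A_pos by simp

lemma unit_cost_le: "0 \<le> u \<Longrightarrow> u \<le> y \<Longrightarrow> unit_cost u \<le> K y + A * F 1"
  using excess_nonneg[of u 1] K_mono[of u y] by (simp add: excess_def)

lemma borel_measurable_K_clamp[measurable]: "(\<lambda>u. K (max 0 u)) \<in> borel_measurable borel"
  by (rule borel_measurable_mono) (auto simp: mono_def intro: K_mono)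

lemma borel_measurable_speed_clamp[measurable]: "(\<lambda>u. speed (max 0 u)) \<in> borel_measurable borel"
  by (rule borel_measurable_mono) (auto simp: mono_def intro: speed_mono)

lemma borel_measurable_F_clamp[measurable]: "(\<lambda>x. F (max 0 x)) \<in> borel_measurable borel"
  by (intro borel_measurable_continuous_onI continuous_on_compose2[OF F_cont] continuous_intros) auto

lemma borel_measurable_unit_cost_clamp[measurable]: "(\<lambda>u. unit_cost (max 0 u)) \<in> borel_measurable borel"
proof -
  have "unit_cost (max 0 u) = K (max 0 u) / speed (max 0 u) + A * F (max 0 (speed (max 0 u)))" for u
    using speed_nonneg by (simp add: unit_cost_def)
  then show ?thesis by simp
qed

abbreviation "\<Phi> \<equiv> Phi K A F y"
abbreviation "\<tau> \<equiv> tau K A F y"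
abbreviation "Yopt \<equiv> Ystar K A F y"

lemma Phi_eq: "0 \<le> z \<Longrightarrow> \<Phi> z = (\<integral>\<^sup>+u\<in>{z..y}. 1 / speed (max 0 u) \<partial>lborel)"
  unfolding Phi_def speed_def by (intro nn_integral_cong) (auto simp: indicator_def)

lemma Phi_antimono: "z1 \<le> z2 \<Longrightarrow> \<Phi> z2 \<le> \<Phi> z1"
  unfolding Phi_def by (intro nn_set_integral_set_mono) auto

lemma Phi_y: "\<Phi> y = 0"
proof -
  have "\<Phi> y = (\<integral>\<^sup>+u. ennreal (1 / speed y) * indicator {y} u \<partial>lborel)"
    unfolding Phi_eq[OF y_nonneg] using y_nonneg by (intro nn_integral_cong) (auto simp: indicator_def)
  then show ?thesis by (simp add: nn_integral_cmult_indicator)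
qed

lemma Phi_finite: assumes "0 < z" shows "\<Phi> z < \<infinity>"
proof -
  have "\<Phi> z \<le> (\<integral>\<^sup>+u. ennreal (1 / speed z) * indicator {z..y} u \<partial>lborel)"
    unfolding Phi_eq[OF less_imp_le[OF assms]]
  proof (intro nn_integral_mono)
    fix u
    have "u \<in> {z..y} \<Longrightarrow> 1 / speed (max 0 u) \<le> 1 / speed z"
      using assms speed_mono[of z u] speed_pos[of z] by (intro divide_left_mono) auto
    then show "ennreal (1 / speed (max 0 u)) * indicator {z..y} u \<le> ennreal (1 / speed z) * indicator {z..y} u"
      by (auto simp: indicator_def intro: ennreal_leI)
  qed
  also have "\<dots> < \<infinity>"
    by (cases "z \<le> y") (simp_all add: nn_integral_cmult_indicator ennreal_mult_less_top)
  finally show ?thesis .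
qed

lemma Phi_gap:
  assumes "0 \<le> z1" "z1 < z2" "z2 \<le> y"
  shows "\<Phi> z2 + ennreal ((z2 - z1) / speed y) \<le> \<Phi> z1"
proof -
  have "0 < speed y" using assms speed_pos[of y] by simp
  have "\<Phi> z2 + ennreal ((z2 - z1) / speed y)
      = (\<integral>\<^sup>+u. ennreal (1 / speed (max 0 u)) * indicator {z2..y} u + ennreal (1 / speed y) * indicator {z1<..<z2} u \<partial>lborel)"
    using assms \<open>0 < speed y\<close> unfolding Phi_eq[of z2, OF order_trans[OF assms(1) less_imp_le[OF assms(2)]]]
    by (subst nn_integral_add) (auto simp: nn_integral_cmult_indicator ennreal_mult[symmetric] divide_simps)
  also have "\<dots> \<le> \<Phi> z1"
    unfolding Phi_eq[OF assms(1)]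
  proof (intro nn_integral_mono)
    fix u
    have "u \<in> {z1<..<z2} \<Longrightarrow> 1 / speed y \<le> 1 / speed (max 0 u)"
      using assms speed_mono[of u y] speed_pos[of u] by (intro divide_left_mono) auto
    then show "ennreal (1 / speed (max 0 u)) * indicator {z2..y} u + ennreal (1 / speed y) * indicator {z1<..<z2} u
        \<le> ennreal (1 / speed (max 0 u)) * indicator {z1..y} u"
      using assms by (auto simp: indicator_def intro: ennreal_leI)
  qed
  finally show ?thesis .
qed

lemma Phi_inj:
  assumes "z1 \<in> {0..y}" "z2 \<in> {0..y}" and eq: "\<Phi> z1 = \<Phi> z2" and fin: "\<Phi> z1 < \<infinity>"
  shows "z1 = z2"
proof (rule ccontr)
  have gap: False if "a \<in> {0..y}" "b \<in> {0..y}" "a < b" "\<Phi> a = \<Phi> b" "\<Phi> a < \<infinity>" for a b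
  proof -
    have "0 < (b - a) / speed y" using that speed_pos[of y] by simp
    moreover have "\<Phi> b + ennreal ((b - a) / speed y) \<le> \<Phi> b" using Phi_gap[of a b] that by auto
    ultimately show False using that
      by (cases "\<Phi> b") (auto simp: ennreal_plus[symmetric] simp del: ennreal_plus)
  qed
  assume "z1 \<noteq> z2"
  then show False
    using gap[of z1 z2] gap[of z2 z1] assms by (cases "z1 < z2") auto
qed

lemma Phi_0_SUP: "\<Phi> 0 = (SUP n. \<Phi> (1 / Suc n))"
proof -
  have "\<Phi> 0 = (SUP n. \<integral>\<^sup>+u\<in>{1 / Suc n..y}. 1 / speed (max 0 u) \<partial>lborel)"
    unfolding Phi_eq[OF order_refl]
  proof (rule nn_integral_Icc_SUP)
    show "decseq (\<lambda>n. 1 / real (Suc n))"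
      by (intro decseq_SucI) (simp add: frac_le)
    show "(\<lambda>n. 1 / real (Suc n)) \<longlonglongrightarrow> 0"
      using LIMSEQ_inverse_real_of_nat by (simp add: inverse_eq_divide)
  qed auto
  then show ?thesis by (simp add: Phi_eq)
qed

text \<open>\<open>time_density z r\<close> is the time the optimal trajectory spends per unit of inventory when
  \<open>r\<close> units out of \<open>y - z\<close> have been sold, so its primitive is the time \<open>\<Phi> (y - r)\<close>.\<close>

definition time_density :: "real \<Rightarrow> real \<Rightarrow> real" where
  "time_density z r = 1 / speed (max 0 (y - r)) * indicator {0..y - z} r"

lemma time_density_nonneg: "0 \<le> time_density z r"
  using speed_nonneg by (simp add: time_density_def)

lemma time_density_vanishes: "r \<notin> {0..y - z} \<Longrightarrow> time_density z r = 0"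
  by (simp add: time_density_def)

lemma borel_measurable_time_density[measurable]: "time_density z \<in> borel_measurable borel"
  unfolding time_density_def[abs_def] by measurable

lemma nn_integral_time_density:
  assumes "z \<in> {0..y}" "v \<in> {0..y - z}"
  shows "(\<integral>\<^sup>+r\<in>{0..v}. time_density z r \<partial>lborel) = \<Phi> (y - v)"
proof -
  have "(\<integral>\<^sup>+r\<in>{0..v}. time_density z r \<partial>lborel) = (\<integral>\<^sup>+r\<in>{0..v}. 1 / speed (max 0 (y - r)) \<partial>lborel)"
    using assms by (intro nn_integral_cong) (auto simp: time_density_def indicator_def)
  also have "\<dots> = (\<integral>\<^sup>+u\<in>{y - v..y}. 1 / speed (max 0 u) \<partial>lborel)"
    by (subst nn_integral_real_affine[where c="-1" and t=y]) (auto simp: indicator_def intro!: nn_integral_cong)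
  also have "\<dots> = \<Phi> (y - v)" using assms by (subst Phi_eq) auto
  finally show ?thesis .
qed

lemma time_density_integrable:
  assumes "z \<in> {0..y}" "\<Phi> z < \<infinity>"
  shows "integrable lborel (time_density z)"
proof (rule integrableI_nonneg)
  have "(\<integral>\<^sup>+r. time_density z r \<partial>lborel) = (\<integral>\<^sup>+r\<in>{0..y - z}. time_density z r \<partial>lborel)"
    by (intro nn_integral_cong) (auto simp: time_density_def indicator_def)
  then show "(\<integral>\<^sup>+r. time_density z r \<partial>lborel) < \<infinity>"
    using nn_integral_time_density[of z "y - z"] assms by simp
qed (auto simp: time_density_nonneg)

lemma Phi_primitive:
  assumes "z \<in> {0..y}" "\<Phi> z < \<infinity>" "v \<in> {0..y - z}"
  shows "\<Phi> (y - v) = ennreal (LINT r:{0..v}|lborel. time_density z r)"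
  using nn_integral_time_density[OF assms(1,3)] time_density_nonneg
  by (simp add: nn_set_integral_eq_set_integral[OF time_density_integrable[OF assms(1,2)]])

lemma Phi_surj:
  assumes "ennreal t \<le> \<Phi> 0"
  shows "\<exists>z\<in>{0..y}. \<Phi> z = ennreal t"
proof (cases "t \<le> 0 \<or> ennreal t = \<Phi> 0")
  case True
  then show ?thesis
  proof
    assume "t \<le> 0"
    then show ?thesis using Phi_y y_nonneg by (intro bexI[of _ y]) (auto simp: ennreal_eq_0_iff)
  qed (use y_nonneg in auto)
next
  case False
  then have "ennreal t < (SUP n. \<Phi> (1 / Suc n))" using assms Phi_0_SUP by (simp add: order_less_le)
  then obtain n where "ennreal t < \<Phi> (1 / Suc n)" by (auto simp: less_SUP_iff)
  moreover define z where "z = 1 / real (Suc n)"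
  ultimately have "0 < z" and t_less: "ennreal t < \<Phi> z" by auto
  then have "z < y" using Phi_antimono[of y z] Phi_y by (cases "z < y") auto
  then have z: "z \<in> {0..y}" "\<Phi> z < \<infinity>" using \<open>0 < z\<close> Phi_finite by auto
  let ?S = "\<lambda>v. LINT r:{0..v}|lborel. time_density z r"
  have "?S 0 \<le> t"
    using Phi_primitive[OF z, of 0] Phi_y \<open>z < y\<close> False by (simp add: ennreal_eq_0_iff)
  moreover have "t \<le> ?S (y - z)"
    using Phi_primitive[OF z, of "y - z"] t_less \<open>z < y\<close> False by (simp add: ennreal_less_iff)
  moreover have "continuous_on {0..y - z} ?S"
    using integrable_mult_indicator[OF _ time_density_integrable[OF z]]
    by (intro continuous_on_subset[OF continuous_on_LBINT]) (auto simp: set_integrable_def)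
  ultimately obtain v where "v \<in> {0..y - z}" "?S v = t"
    using IVT'[of ?S 0 t "y - z"] \<open>z < y\<close> by auto
  then show ?thesis using Phi_primitive[OF z, of v] \<open>z < y\<close> \<open>0 < z\<close> by (intro bexI[of _ "y - v"]) auto
qed

lemma Yopt_char:
  assumes "ennreal t \<le> \<tau>"
  shows "Yopt t \<in> {0..y}" and "\<Phi> (Yopt t) = ennreal t"
proof -
  obtain z where z: "z \<in> {0..y}" "\<Phi> z = ennreal t"
    using Phi_surj assms unfolding tau_def by blast
  have unique: "\<exists>!z. 0 \<le> z \<and> z \<le> y \<and> \<Phi> z = ennreal t"
  proof (rule ex1I[of _ z])
    fix z' assume "0 \<le> z' \<and> z' \<le> y \<and> \<Phi> z' = ennreal t"
    then show "z' = z" using Phi_inj[of z' z] z by auto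
  qed (use z in auto)
  have "Yopt t = (THE z. 0 \<le> z \<and> z \<le> y \<and> \<Phi> z = ennreal t)"
    using assms by (simp add: Ystar_def)
  then have "0 \<le> Yopt t \<and> Yopt t \<le> y \<and> \<Phi> (Yopt t) = ennreal t"
    using theI'[OF unique] by simp
  then show "Yopt t \<in> {0..y}" and "\<Phi> (Yopt t) = ennreal t" by auto
qed

lemma Yopt_after_tau: "\<tau> < ennreal t \<Longrightarrow> Yopt t = 0"
  by (simp add: Ystar_def)

lemma Yopt_range: "Yopt t \<in> {0..y}"
  using Yopt_char(1)[of t] Yopt_after_tau[of t] y_nonneg by (cases "ennreal t \<le> \<tau>") auto

lemma Yopt_eqI:
  assumes "z \<in> {0..y}" and "\<Phi> z = ennreal t"
  shows "Yopt t = z"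
proof -
  have "ennreal t \<le> \<tau>" using Phi_antimono[of 0 z] assms by (auto simp: tau_def)
  then show ?thesis using Phi_inj[of "Yopt t" z] Yopt_char assms by auto
qed

lemma Yopt_antimono: assumes "s \<le> t" shows "Yopt t \<le> Yopt s"
proof (cases "ennreal t \<le> \<tau>")
  case False
  then show ?thesis using Yopt_after_tau[of t] Yopt_range[of s] by auto
next
  case True
  then have s: "ennreal s \<le> \<tau>" using assms order_trans ennreal_leI by blast
  show ?thesis
  proof (rule ccontr)
    assume less: "\<not> Yopt t \<le> Yopt s"
    then have "ennreal t \<le> ennreal s"
      using Phi_antimono[of "Yopt s" "Yopt t"] Yopt_char[OF True] Yopt_char[OF s] by simp
    then have "ennreal t = ennreal s" using ennreal_leI[OF assms] by (rule antisym)
    then have "\<Phi> (Yopt t) = \<Phi> (Yopt s)"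
      using Yopt_char(2)[OF True] Yopt_char(2)[OF s] by simp
    moreover have "\<Phi> (Yopt t) < \<infinity>" using Yopt_char(2)[OF True] by simp
    ultimately have "Yopt t = Yopt s" using Phi_inj[OF Yopt_range Yopt_range] by blast
    then show False using less by simp
  qed
qed

lemma Yopt_tendsto_0: "(Yopt \<longlongrightarrow> 0) at_top"
proof (rule order_tendstoI)
  fix a :: real assume "a < 0"
  then have "a < Yopt t" for t using Yopt_range[of t] by auto
  then show "eventually (\<lambda>t. a < Yopt t) at_top" by simp
next
  fix b :: real assume "0 < b"
  obtain T where "Yopt T < b"
  proof (cases "y < b")
    case True
    then show ?thesis using Yopt_range[of 0] that[of 0] by auto
  next
    case False
    define T where "T = enn2real (\<Phi> b) + 1"
    have "\<Phi> b < ennreal T"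
      using Phi_finite[OF \<open>0 < b\<close>] unfolding T_def by (cases "\<Phi> b") (auto simp: ennreal_less_iff)
    then have "Yopt T < b" if "ennreal T \<le> \<tau>"
      using Yopt_char[OF that] Phi_antimono[of b "Yopt T"] by (cases "b \<le> Yopt T") auto
    then show ?thesis
      using Yopt_after_tau[of T] \<open>0 < b\<close> that[of T] by (cases "ennreal T \<le> \<tau>") auto
  qed
  then have "Yopt t < b" if "T \<le> t" for t
    using Yopt_antimono[OF that] by linarith
  then show "eventually (\<lambda>t. Yopt t < b) at_top"
    by (auto simp: eventually_at_top_linorder)
qed

lemma borel_measurable_Yopt[measurable]: "Yopt \<in> borel_measurable borel"
  by (intro borel_measurable_antimono antimonoI Yopt_antimono)

definition opt_speed :: "real \<Rightarrow> real" where "opt_speed t = speed (Yopt t)"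

lemma opt_speed_nonneg: "0 \<le> opt_speed t"
  by (simp add: opt_speed_def speed_nonneg)

lemma borel_measurable_opt_speed[measurable]: "opt_speed \<in> borel_measurable borel"
proof -
  have "opt_speed = (\<lambda>t. speed (max 0 (Yopt t)))"
    using Yopt_range by (simp add: opt_speed_def fun_eq_iff)
  then show ?thesis by simp
qed

text \<open>Before \<open>\<tau>\<close>, \<open>\<Phi>\<close> gives the time at which \<open>Yopt\<close> reaches a level; its primitive \<open>X\<close>
  inverts \<open>r \<mapsto> Yopt\<close> at level \<open>y - r\<close>, so substituting \<open>s = X r\<close> turns
  \<open>opt_speed s ds\<close> into \<open>speed (y - r) / speed (y - r) dr\<close>.\<close>

lemma nn_integral_opt_speed_upto_tau:
  assumes "0 \<le> t" "ennreal t \<le> \<tau>"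
  shows "(\<integral>\<^sup>+s\<in>{0..t}. opt_speed s \<partial>lborel) = ennreal (y - Yopt t)"
proof -
  define z where "z = Yopt t"
  have z: "z \<in> {0..y}" "\<Phi> z = ennreal t" using Yopt_char[OF assms(2)] by (auto simp: z_def)
  define X where "X v = (LINT r:{0..v}|lborel. time_density z r)" for v
  have fin: "\<Phi> z < \<infinity>" using z by simp
  note \<rho> = time_density_nonneg time_density_integrable[OF z(1) fin] time_density_vanishes
  have X_Phi: "\<Phi> (y - r) = ennreal (X r)" if "r \<in> {0..y - z}" for r
    using Phi_primitive[OF z(1) fin that] by (simp add: X_def)
  have "X (y - z) = t"
    using X_Phi[of "y - z"] z \<open>0 \<le> t\<close> primitive_nonneg[where g="time_density z" and T="y - z" and v="y - z"] \<rho>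
    by (simp add: X_def)
  have Yopt_X: "Yopt (X r) = y - r" if "r \<in> {0..y - z}" for r
    using that z by (intro Yopt_eqI) (auto simp: X_Phi)
  have "(\<integral>\<^sup>+s\<in>{0..t}. opt_speed s \<partial>lborel) = (\<integral>\<^sup>+r. ennreal (time_density z r) * opt_speed (X r) \<partial>lborel)"
    using nn_integral_primitive_change_var[where g="time_density z" and T="y - z" and f="\<lambda>s. ennreal (opt_speed s)"] \<rho> z \<open>X (y - z) = t\<close>
    by (simp add: X_def)
  also have "\<dots> = (\<integral>\<^sup>+r. indicator {0..y - z} r \<partial>lborel)"
  proof (rule nn_integral_cong_AE)
    show "AE r in lborel. ennreal (time_density z r) * opt_speed (X r) = indicator {0..y - z} r"
      using AE_lborel_singleton[of y]
    proof eventually_elim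
      case (elim r)
      show ?case
      proof (cases "r \<in> {0..y - z}")
        case True
        then have "0 < speed (y - r)" using elim z by (intro speed_pos) auto
        then show ?thesis
          using True Yopt_X[OF True] z by (simp add: time_density_def opt_speed_def ennreal_mult[symmetric])
      qed (simp add: time_density_def)
    qed
  qed
  also have "\<dots> = ennreal (y - Yopt t)" using z by (simp add: z_def)
  finally show ?thesis .
qed

lemma nn_integral_opt_speed:
  assumes "0 \<le> t"
  shows "(\<integral>\<^sup>+s\<in>{0..t}. opt_speed s \<partial>lborel) = ennreal (y - Yopt t)"
proof (cases "ennreal t \<le> \<tau>")
  case False
  then obtain T where T: "\<tau> = ennreal T" "0 \<le> T" "T < t"
    by (cases \<tau>) (auto simp: ennreal_less_iff)
  have "(\<integral>\<^sup>+s\<in>{0..t}. opt_speed s \<partial>lborel) = (\<integral>\<^sup>+s\<in>{0..T}. opt_speed s \<partial>lborel)"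
  proof (intro nn_integral_cong)
    fix s
    have "T < s \<Longrightarrow> opt_speed s = 0"
      using T Yopt_after_tau[of s] by (simp add: opt_speed_def speed_0 ennreal_less_iff)
    then show "ennreal (opt_speed s) * indicator {0..t} s = ennreal (opt_speed s) * indicator {0..T} s"
      using T by (cases "T < s") (auto simp: indicator_def)
  qed
  also have "\<dots> = ennreal (y - Yopt T)"
    using T by (intro nn_integral_opt_speed_upto_tau) auto
  also have "Yopt T = 0"
    using T y_nonneg by (intro Yopt_eqI) (auto simp: tau_def)
  finally show ?thesis using Yopt_after_tau[of t] False by simp
qed (use assms nn_integral_opt_speed_upto_tau in auto)

lemma opt_speed_integrable: "0 \<le> t \<Longrightarrow> set_integrable lborel {0..t} opt_speed"
  and traj_opt_speed: "0 \<le> t \<Longrightarrow> traj y opt_speed t = Yopt t"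
proof -
  assume "0 \<le> t"
  have nn: "(\<integral>\<^sup>+s. ennreal (indicator {0..t} s *\<^sub>R opt_speed s) \<partial>lborel) = ennreal (y - Yopt t)"
    using nn_integral_opt_speed[OF \<open>0 \<le> t\<close>] by (simp add: indicator_mult_ennreal mult.commute)
  then show int: "set_integrable lborel {0..t} opt_speed"
    unfolding set_integrable_def using opt_speed_nonneg by (intro integrableI_nonneg) auto
  have "ennreal (LINT s:{0..t}|lborel. opt_speed s) = (\<integral>\<^sup>+s. ennreal (indicator {0..t} s *\<^sub>R opt_speed s) \<partial>lborel)"
    unfolding set_lebesgue_integral_def using opt_speed_nonneg
    by (intro nn_integral_eq_integral[symmetric] int[unfolded set_integrable_def]) auto
  also have "\<dots> = ennreal (y - Yopt t)" by (rule nn)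
  finally have "ennreal (LINT s:{0..t}|lborel. opt_speed s) = ennreal (y - Yopt t)" .
  moreover have "0 \<le> (LINT s:{0..t}|lborel. opt_speed s)"
    unfolding set_lebesgue_integral_def by (intro integral_nonneg_AE) (auto simp: opt_speed_nonneg)
  ultimately show "traj y opt_speed t = Yopt t"
    using Yopt_range[of t] by (simp add: traj_def)
qed

lemma traj_opt_speed_tendsto_0: "(traj y opt_speed \<longlongrightarrow> 0) at_top"
  using Yopt_tendsto_0 by (rule tendsto_cong[THEN iffD2, rotated])
    (auto simp: eventually_at_top_linorder traj_opt_speed intro!: exI[of _ 0])

abbreviation "optimal_value \<equiv> (\<integral>\<^sup>+u\<in>{0..y}. ennreal (unit_cost u) \<partial>lborel)"

lemma optimal_value_finite: "optimal_value < \<infinity>"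
proof -
  have "optimal_value \<le> (\<integral>\<^sup>+u. ennreal (K y + A * F 1) * indicator {0..y} u \<partial>lborel)"
    by (intro nn_integral_mono) (auto simp: indicator_def intro!: ennreal_leI unit_cost_le)
  also have "\<dots> < \<infinity>"
    using y_nonneg by (simp add: nn_integral_cmult_indicator ennreal_mult_less_top)
  finally show ?thesis .
qed

lemma admissible_traj_nonneg: "admissible m y \<eta> \<Longrightarrow> 0 \<le> t \<Longrightarrow> 0 \<le> traj y \<eta> t"
  using antimono_tendsto_0_nonneg[OF traj_antimono_atLeast admissible_traj_tendsto_0]
    admissible_speed by blast

lemma borel_measurable_excess_traj:
  assumes adm: "admissible m y \<eta>"
  shows "(\<lambda>t. ennreal (excess (\<eta> t) (traj y \<eta> t)) * indicator {0..} t) \<in> borel_measurable borel"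
proof -
  note [measurable] = borel_measurable_restrict_atLeast[OF admissible_speed[OF adm]]
    borel_measurable_traj[OF admissible_speed[OF adm]]
  let ?\<eta> = "\<lambda>t. \<eta> t * indicator {0..} t" and ?Y = "\<lambda>t. traj y \<eta> (max 0 t)"
  have "(\<lambda>t. ennreal (K (max 0 (?Y t)) + A * ?\<eta> t * F (max 0 (?\<eta> t)) - ?\<eta> t * unit_cost (max 0 (?Y t)))
      * indicator {0..} t) \<in> borel_measurable borel"
    by measurable
  also have "(\<lambda>t. ennreal (K (max 0 (?Y t)) + A * ?\<eta> t * F (max 0 (?\<eta> t)) - ?\<eta> t * unit_cost (max 0 (?Y t)))
      * indicator {0..} t) = (\<lambda>t. ennreal (excess (\<eta> t) (traj y \<eta> t)) * indicator {0..} t)"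
    using admissible_traj_nonneg[OF adm] admissible_speed(1)[OF adm]
    by (auto simp: fun_eq_iff indicator_def excess_def)
  finally show ?thesis .
qed

lemma cost_decomposition:
  assumes adm: "admissible m y \<eta>"
  shows "cost K A F y \<eta> = (\<integral>\<^sup>+t\<in>{0..}. excess (\<eta> t) (traj y \<eta> t) \<partial>lborel) + optimal_value"
proof -
  note speed = admissible_speed[OF adm]
  note [measurable] = borel_measurable_restrict_atLeast[OF speed] borel_measurable_traj[OF speed]
  let ?Y = "traj y \<eta>"
  have split: "ennreal (K (?Y t) + A * \<eta> t * F (\<eta> t)) * indicator {0..} t
      = ennreal (excess (\<eta> t) (?Y t)) * indicator {0..} t + ennreal (\<eta> t) * ennreal (unit_cost (max 0 (?Y t))) * indicator {0..} t"
    for t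
  proof (cases "0 \<le> t")
    case True
    have "0 \<le> excess (\<eta> t) (?Y t)" "0 \<le> \<eta> t" "0 \<le> unit_cost (?Y t)"
      using excess_nonneg unit_cost_nonneg admissible_traj_nonneg[OF adm True] speed(1)[OF True] by auto
    moreover have "K (?Y t) + A * \<eta> t * F (\<eta> t) = excess (\<eta> t) (?Y t) + \<eta> t * unit_cost (?Y t)"
      by (simp add: excess_def)
    ultimately show ?thesis
      using True admissible_traj_nonneg[OF adm True] by (simp add: ennreal_plus ennreal_mult)
  qed simp
  have "(\<lambda>t. ennreal (\<eta> t * indicator {0..} t) * ennreal (unit_cost (max 0 (?Y (max 0 t)))))
      \<in> borel_measurable borel"
    by measurable
  also have "(\<lambda>t. ennreal (\<eta> t * indicator {0..} t) * ennreal (unit_cost (max 0 (?Y (max 0 t)))))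
      = (\<lambda>t. ennreal (\<eta> t) * ennreal (unit_cost (max 0 (?Y t))) * indicator {0..} t)"
    by (auto simp: fun_eq_iff indicator_def)
  finally have "cost K A F y \<eta> = (\<integral>\<^sup>+t\<in>{0..}. excess (\<eta> t) (?Y t) \<partial>lborel)
      + (\<integral>\<^sup>+t\<in>{0..}. \<eta> t * ennreal (unit_cost (max 0 (?Y t))) \<partial>lborel)"
    unfolding cost_def split using borel_measurable_excess_traj[OF adm] by (intro nn_integral_add) auto
  also have "(\<integral>\<^sup>+t\<in>{0..}. \<eta> t * ennreal (unit_cost (max 0 (?Y t))) \<partial>lborel)
      = (\<integral>\<^sup>+u\<in>{0..y}. ennreal (unit_cost (max 0 u)) \<partial>lborel)"
    by (intro nn_integral_traj_change_var_atLeast speed admissible_traj_tendsto_0[OF adm]) auto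
  also have "\<dots> = optimal_value"
    by (intro nn_integral_cong) (auto simp: indicator_def)
  finally show ?thesis .
qed

lemma power_div_speed_le:
  assumes "0 < b" and growth: "\<And>u. u \<in> {0..y} \<Longrightarrow> b * u ^ p \<le> K u" and "0 < u" "u \<le> y"
  shows "u ^ p / speed u \<le> (K y + A * F 1) / b"
proof -
  have "0 < speed u" using speed_pos[OF \<open>0 < u\<close>] .
  then have "u ^ p / speed u \<le> (K u / b) / speed u"
    using growth[of u] assms by (intro divide_right_mono) (auto simp: field_simps)
  also have "\<dots> \<le> unit_cost u / b"
    using \<open>0 < speed u\<close> \<open>0 < b\<close> F_nonneg A_pos
    by (auto simp: unit_cost_def field_simps intro!: mult_nonneg_nonneg)
  also have "\<dots> \<le> (K y + A * F 1) / b"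
    using unit_cost_le[of u] assms by (intro divide_right_mono) auto
  finally show ?thesis .
qed

lemma nn_integral_Yopt_power_finite:
  assumes "1 \<le> p" and "0 < b" and growth: "\<And>u. u \<in> {0..y} \<Longrightarrow> b * u ^ p \<le> K u"
  shows "(\<integral>\<^sup>+t\<in>{0..}. Yopt t ^ p \<partial>lborel) < \<infinity>"
proof -
  let ?f = "\<lambda>u. ennreal (u ^ p / speed (max 0 u))"
  have "(\<integral>\<^sup>+t\<in>{0..}. Yopt t ^ p \<partial>lborel) = (\<integral>\<^sup>+t\<in>{0..}. opt_speed t * ?f (traj y opt_speed t) \<partial>lborel)"
  proof (intro nn_integral_cong)
    fix t :: real
    have "ennreal (opt_speed t) * ?f (Yopt t) = ennreal (Yopt t ^ p)"
    proof (cases "Yopt t = 0")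
      case False
      then have "0 < speed (Yopt t)" using Yopt_range[of t] by (intro speed_pos) auto
      then show ?thesis using Yopt_range[of t] by (simp add: opt_speed_def ennreal_mult[symmetric])
    qed (use \<open>1 \<le> p\<close> in \<open>simp add: opt_speed_def speed_0\<close>)
    then show "ennreal (Yopt t ^ p) * indicator {0..} t = ennreal (opt_speed t) * ?f (traj y opt_speed t) * indicator {0..} t"
      by (cases "0 \<le> t") (auto simp: traj_opt_speed)
  qed
  also have "\<dots> = (\<integral>\<^sup>+u\<in>{0..y}. ?f u \<partial>lborel)"
    using opt_speed_nonneg opt_speed_integrable traj_opt_speed_tendsto_0
    by (intro nn_integral_traj_change_var_atLeast) auto
  also have "\<dots> \<le> (\<integral>\<^sup>+u. ennreal ((K y + A * F 1) / b) * indicator {0..y} u \<partial>lborel)"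
  proof (intro nn_integral_mono)
    fix u
    have "0 \<le> (K y + A * F 1) / b"
      using K_nonneg[OF y_nonneg] F_nonneg A_pos \<open>0 < b\<close> by simp
    then show "?f u * indicator {0..y} u \<le> ennreal ((K y + A * F 1) / b) * indicator {0..y} u"
      using power_div_speed_le[OF \<open>0 < b\<close> growth, of u] \<open>1 \<le> p\<close>
      by (cases "u = 0") (auto simp: indicator_def power_0_left intro: ennreal_leI)
  qed
  also have "\<dots> < \<infinity>"
    using y_nonneg by (simp add: nn_integral_cmult_indicator ennreal_mult_less_top)
  finally show ?thesis .
qed

lemma set_integrable_Yopt_power:
  assumes "1 \<le> p" and "0 < b" and "\<And>u. u \<in> {0..y} \<Longrightarrow> b * u ^ p \<le> K u"
  shows "set_integrable lborel {0..} (\<lambda>t. \<bar>traj y opt_speed t\<bar> ^ p)"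
proof -
  have "(\<lambda>t. indicator {0..} t *\<^sub>R \<bar>traj y opt_speed t\<bar> ^ p) = (\<lambda>t. indicator {0..} t *\<^sub>R Yopt t ^ p)"
    using Yopt_range by (auto simp: fun_eq_iff indicator_def traj_opt_speed)
  moreover have "integrable lborel (\<lambda>t. indicator {0..} t *\<^sub>R Yopt t ^ p)"
  proof (rule integrableI_nonneg)
    have "(\<integral>\<^sup>+t. ennreal (indicator {0..} t *\<^sub>R Yopt t ^ p) \<partial>lborel) = (\<integral>\<^sup>+t\<in>{0..}. Yopt t ^ p \<partial>lborel)"
      by (intro nn_integral_cong) (auto simp: indicator_def)
    then show "(\<integral>\<^sup>+t. ennreal (indicator {0..} t *\<^sub>R Yopt t ^ p) \<partial>lborel) < \<infinity>"
      using nn_integral_Yopt_power_finite[OF assms] by simp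
  qed (use Yopt_range in \<open>auto simp: indicator_def\<close>)
  ultimately show ?thesis by (simp add: set_integrable_def)
qed

lemma admissible_opt_speed: "admissible m y opt_speed"
proof (cases "m = 0")
  case True
  then obtain b where "0 < b" "\<And>u. u \<in> {0..y} \<Longrightarrow> b * u ^ 2 \<le> K u" using K_quadratic_growth by auto
  then show ?thesis
    using True set_integrable_Yopt_power[of 2 b] opt_speed_nonneg opt_speed_integrable
    by (auto simp: admissible_def)
next
  case False
  then obtain a where "0 < a" "\<And>u. u \<in> {0..y} \<Longrightarrow> a * u ^ 1 \<le> K u" using K_linear_growth by auto
  then show ?thesis
    using False set_integrable_Yopt_power[of 1 a] opt_speed_nonneg opt_speed_integrable
    by (auto simp: admissible_def)
qed

lemma cost_opt_speed: "cost K A F y opt_speed = optimal_value"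
proof -
  have "(\<integral>\<^sup>+t\<in>{0..}. excess (opt_speed t) (traj y opt_speed t) \<partial>lborel) = (\<integral>\<^sup>+(t::real). 0 \<partial>lborel)"
  proof (intro nn_integral_cong)
    fix t :: real
    show "ennreal (excess (opt_speed t) (traj y opt_speed t)) * indicator {0..} t = 0"
      using excess_speed[of "Yopt t"] Yopt_range[of t]
      by (cases "0 \<le> t") (auto simp: traj_opt_speed opt_speed_def)
  qed
  then show ?thesis using cost_decomposition[OF admissible_opt_speed] by simp
qed

lemma optimal_imp_speed_feedback:
  assumes adm: "admissible m y \<eta>" and opt: "cost K A F y \<eta> = optimal_value"
  shows "AE t in lborel. 0 \<le> t \<longrightarrow> \<eta> t = speed (traj y \<eta> t)"
proof -
  have "optimal_value + (\<integral>\<^sup>+t\<in>{0..}. excess (\<eta> t) (traj y \<eta> t) \<partial>lborel) = optimal_value + 0"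
    using cost_decomposition[OF adm] opt by (simp add: add.commute)
  then have "(\<integral>\<^sup>+t\<in>{0..}. excess (\<eta> t) (traj y \<eta> t) \<partial>lborel) = 0"
    using optimal_value_finite by (auto simp: ennreal_add_left_cancel)
  then have "AE t in lborel. ennreal (excess (\<eta> t) (traj y \<eta> t)) * indicator {0..} t = 0"
    using borel_measurable_excess_traj[OF adm] by (subst (asm) nn_integral_0_iff_AE) auto
  then show ?thesis
  proof (rule AE_mp, intro AE_I2 impI)
    fix t :: real assume "ennreal (excess (\<eta> t) (traj y \<eta> t)) * indicator {0..} t = 0" "0 \<le> t"
    then have "excess (\<eta> t) (traj y \<eta> t) \<le> 0" by (simp add: ennreal_eq_0_iff)
    moreover note nonneg = admissible_traj_nonneg[OF adm \<open>0 \<le> t\<close>] admissible_speed(1)[OF adm \<open>0 \<le> t\<close>]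
    ultimately have "excess (\<eta> t) (traj y \<eta> t) = 0"
      using excess_nonneg[OF nonneg] by linarith
    then show "\<eta> t = speed (traj y \<eta> t)"
      using excess_eq_0_imp_speed[OF nonneg] by simp
  qed
qed

lemma Phi_traj_speed_feedback:
  assumes adm: "admissible m y \<eta>"
    and feedback: "AE t in lborel. 0 \<le> t \<longrightarrow> \<eta> t = speed (traj y \<eta> t)" and "0 \<le> t"
  shows "\<Phi> (traj y \<eta> t) = (\<integral>\<^sup>+r\<in>{0..t}. (if 0 < traj y \<eta> r then 1 else 0) \<partial>lborel)"
proof -
  let ?Y = "traj y \<eta>"
  note speed = admissible_speed[OF adm]
  have "\<Phi> (?Y t) = (\<integral>\<^sup>+u\<in>{?Y t..y}. 1 / speed (max 0 u) \<partial>lborel)"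
    using Phi_eq admissible_traj_nonneg[OF adm \<open>0 \<le> t\<close>] by simp
  also have "\<dots> = (\<integral>\<^sup>+r\<in>{0..t}. \<eta> r * ennreal (1 / speed (max 0 (?Y r))) \<partial>lborel)"
    using speed \<open>0 \<le> t\<close> by (intro nn_integral_traj_change_var[symmetric]) auto
  also have "\<dots> = (\<integral>\<^sup>+r\<in>{0..t}. (if 0 < ?Y r then 1 else 0) \<partial>lborel)"
  proof (intro nn_integral_cong_AE, use feedback in eventually_elim)
    case (elim r)
    show ?case
    proof (cases "r \<in> {0..t} \<and> 0 < ?Y r")
      case True
      then have "0 < speed (?Y r)" by (intro speed_pos) auto
      then show ?thesis using elim True by (simp add: ennreal_mult[symmetric])
    next
      case False
      then show ?thesis using elim admissible_traj_nonneg[OF adm, of r] by (auto simp: speed_0 indicator_def)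
    qed
  qed
  finally show ?thesis .
qed

lemma speed_feedback_imp_traj_eq_Yopt:
  assumes adm: "admissible m y \<eta>"
    and feedback: "AE t in lborel. 0 \<le> t \<longrightarrow> \<eta> t = speed (traj y \<eta> t)" and "0 \<le> t"
  shows "traj y \<eta> t = Yopt t"
proof -
  let ?Y = "traj y \<eta>"
  note Phi_Y = Phi_traj_speed_feedback[OF assms]
  have Y_range: "?Y t \<in> {0..y}"
    using admissible_traj_nonneg[OF adm \<open>0 \<le> t\<close>] traj_le_start[OF admissible_speed[OF adm] \<open>0 \<le> t\<close>] by simp
  show ?thesis
  proof (cases "0 < ?Y t")
    case True
    then have "0 < ?Y r" if "r \<in> {0..t}" for r
      using traj_antimono_atLeast[OF admissible_speed[OF adm], where y=y and s=r and t=t] that by auto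
    then have "(\<integral>\<^sup>+r\<in>{0..t}. (if 0 < ?Y r then 1 else 0) \<partial>lborel) = (\<integral>\<^sup>+r. indicator {0..t} r \<partial>lborel)"
      by (intro nn_integral_cong) (auto simp: indicator_def)
    then have "\<Phi> (?Y t) = ennreal t"
      unfolding Phi_Y using \<open>0 \<le> t\<close> by simp
    then show ?thesis using Yopt_eqI[OF Y_range] by simp
  next
    case False
    then have "?Y t = 0" using Y_range by simp
    have "\<Phi> 0 \<le> (\<integral>\<^sup>+r. indicator {0..t} r \<partial>lborel)"
      using Phi_Y \<open>?Y t = 0\<close> by (auto simp: indicator_def intro!: nn_integral_mono)
    then have "\<Phi> 0 \<le> ennreal t" using \<open>0 \<le> t\<close> by simp
    then show ?thesis
      using Yopt_after_tau[of t] Yopt_eqI[of 0 t] y_nonneg \<open>?Y t = 0\<close>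
      by (cases "\<tau> < ennreal t") (auto simp: tau_def)
  qed
qed

lemma valueV_eq_optimal_value: "valueV m K A F y = optimal_value"
  unfolding valueV_def
proof (rule antisym)
  show "(INF \<eta>\<in>{\<eta>. admissible m y \<eta>}. cost K A F y \<eta>) \<le> optimal_value"
    using admissible_opt_speed cost_opt_speed by (metis (mono_tags) INF_lower mem_Collect_eq)
  show "optimal_value \<le> (INF \<eta>\<in>{\<eta>. admissible m y \<eta>}. cost K A F y \<eta>)"
    using cost_decomposition by (intro INF_greatest) simp
qed

theorem opt_speed_unique_optimal:
  "admissible m y opt_speed \<and> (\<forall>t\<ge>0. traj y opt_speed t = Yopt t)
   \<and> cost K A F y opt_speed = valueV m K A F y
   \<and> (\<forall>\<eta>. admissible m y \<eta> \<and> cost K A F y \<eta> = valueV m K A F y \<longrightarrow> (\<forall>t\<ge>0. traj y \<eta> t = Yopt t))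
   \<and> valueV m K A F y = optimal_value"
proof (intro conjI allI impI)
  fix \<eta> and t :: real
  assume "admissible m y \<eta> \<and> cost K A F y \<eta> = valueV m K A F y" and "0 \<le> t"
  then have adm: "admissible m y \<eta>" and "cost K A F y \<eta> = optimal_value"
    using valueV_eq_optimal_value by auto
  then show "traj y \<eta> t = Yopt t"
    using speed_feedback_imp_traj_eq_Yopt[OF adm optimal_imp_speed_feedback[OF adm] \<open>0 \<le> t\<close>] by simp
qed (simp_all add: admissible_opt_speed traj_opt_speed cost_opt_speed valueV_eq_optimal_value)

end


definition exp_rem :: "real \<Rightarrow> real" where "exp_rem w = exp w - 1 - w"

lemma exp_rem_nonneg: "0 \<le> exp_rem w"
  unfolding exp_rem_def using exp_ge_add_one_self[of w] by linarith

lemma exp_rem_Lagrange: "\<exists>t. \<bar>t\<bar> \<le> \<bar>w\<bar> \<and> exp_rem w = exp t / 2 * w\<^sup>2"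
proof -
  obtain t where "\<bar>t\<bar> \<le> \<bar>w\<bar>" "exp w = (\<Sum>m<2. w ^ m / fact m) + exp t / fact 2 * w ^ 2"
    using Maclaurin_exp_le[of w 2] by blast
  then show ?thesis by (intro exI[of _ t]) (simp add: exp_rem_def numeral_2_eq_2)
qed

lemma exp_rem_le: "exp_rem w \<le> exp \<bar>w\<bar> / 2 * w\<^sup>2"
proof -
  obtain t where "\<bar>t\<bar> \<le> \<bar>w\<bar>" "exp_rem w = exp t / 2 * w\<^sup>2" using exp_rem_Lagrange by blast
  then show ?thesis by (simp add: mult_right_mono)
qed

lemma exp_rem_ge: assumes "- M \<le> w" "0 \<le> M" shows "exp (- M) / 2 * w\<^sup>2 \<le> exp_rem w"
proof (cases "0 \<le> w")
  case True
  have "exp (- M) * w\<^sup>2 \<le> w\<^sup>2" using assms(2) by (intro mult_left_le_one_le) auto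
  moreover have "w\<^sup>2 / 2 \<le> exp_rem w" using exp_lower_Taylor_quadratic[OF True] by (simp add: exp_rem_def)
  ultimately show ?thesis by simp
next
  case False
  obtain t where t: "\<bar>t\<bar> \<le> \<bar>w\<bar>" "exp_rem w = exp t / 2 * w\<^sup>2" using exp_rem_Lagrange by blast
  then have "exp (- M) \<le> exp t" using assms False by simp
  then show ?thesis using t(2) by (simp add: mult_right_mono)
qed

lemma exp_rem_scale: assumes "0 \<le> l" "l \<le> 1" shows "exp_rem (l * w) \<le> exp_rem w"
proof -
  have "exp ((1 - l) *\<^sub>R 0 + l *\<^sub>R w) \<le> (1 - l) * exp 0 + l * exp w"
    using convex_onD[OF exp_convex, of l 0 w] assms by simp
  then have "exp_rem (l * w) \<le> l * exp_rem w" by (simp add: exp_rem_def algebra_simps)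
  also have "\<dots> \<le> exp_rem w" using assms exp_rem_nonneg[of w] by (simp add: mult_left_le_one_le)
  finally show ?thesis .
qed

lemma exp_rem_jump_ge:
  fixes v V z :: real
  assumes "0 \<le> v" "v \<le> V" "z \<le> real n"
  shows "exp (- (V * exp (real n))) / 2 * v\<^sup>2 * (exp z - 1)\<^sup>2 \<le> exp_rem (- v * (exp z - 1))"
proof -
  have "exp z \<le> exp (real n)" using assms by simp
  then have "exp z - 1 \<le> exp (real n)" by linarith
  then have "v * (exp z - 1) \<le> v * exp (real n)"
    using assms by (intro mult_left_mono) auto
  also have "\<dots> \<le> V * exp (real n)"
    using assms by (intro mult_right_mono) auto
  finally have "v * (exp z - 1) \<le> V * exp (real n)" .
  moreover have "0 \<le> V * exp (real n)" using assms by simp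
  ultimately show ?thesis
    using exp_rem_ge[of "V * exp (real n)" "- v * (exp z - 1)"] by (simp add: power_mult_distrib)
qed

lemma abs_exp_minus_one_le: fixes z :: real assumes "\<bar>z\<bar> \<le> 1" shows "\<bar>exp z - 1\<bar> \<le> 3 * \<bar>z\<bar>"
proof -
  obtain t where t: "\<bar>t\<bar> \<le> \<bar>z\<bar>" "exp z = (\<Sum>m<1. z ^ m / fact m) + exp t / fact 1 * z ^ 1"
    using Maclaurin_exp_le[of z 1] by blast
  have "exp t \<le> exp 1" using t(1) assms by simp
  also have "\<dots> \<le> 3" using exp_le by simp
  finally show ?thesis using t(2) by (simp add: abs_mult mult_right_mono)
qed

lemma exp_rem_small_jump_le:
  fixes c z :: real
  assumes "0 \<le> c" and "\<bar>z\<bar> < 1"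
  shows "exp_rem (- c * (exp z - 1)) \<le> 9 * c\<^sup>2 * exp (3 * c) / 2 * z\<^sup>2"
proof -
  let ?w = "- c * (exp z - 1)"
  have "\<bar>?w\<bar> = c * \<bar>exp z - 1\<bar>" using assms by (simp add: abs_mult)
  also have "\<dots> \<le> c * (3 * \<bar>z\<bar>)"
    using abs_exp_minus_one_le[of z] assms by (intro mult_left_mono) auto
  finally have w: "\<bar>?w\<bar> \<le> c * (3 * \<bar>z\<bar>)" .
  then have "\<bar>?w\<bar> \<le> 3 * c" using assms mult_left_mono[of "\<bar>z\<bar>" 1 c] by linarith
  moreover have "?w\<^sup>2 \<le> 9 * c\<^sup>2 * z\<^sup>2"
    using power_mono[OF w, of 2] by (simp add: power_mult_distrib)
  ultimately have "exp \<bar>?w\<bar> / 2 * ?w\<^sup>2 \<le> exp (3 * c) / 2 * (9 * c\<^sup>2 * z\<^sup>2)"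
    by (intro mult_mono divide_right_mono) auto
  then show ?thesis using exp_rem_le[of ?w] by (simp add: algebra_simps)
qed

text \<open>Small jumps are controlled by \<open>z\<^sup>2\<close>, large positive ones by the moment \<open>exp (2 z)\<close>, and for large
  negative ones the argument of \<open>exp_rem\<close> stays in \<open>[0, c]\<close>.\<close>

lemma exp_rem_compensated_jump_le:
  fixes c z :: real
  assumes "0 \<le> c"
  shows "exp_rem (- c * (exp z - 1))
    \<le> (9 * c\<^sup>2 * exp (3 * c) / 2 + exp c) * min 1 (z\<^sup>2) + c * (indicator {z. 1 \<le> \<bar>z\<bar>} z * exp (2 * z))"
    (is "exp_rem ?w \<le> ?C * _ + _")
proof -
  have "0 \<le> ?C" by simp
  consider "\<bar>z\<bar> < 1" | "1 \<le> z" | "z \<le> -1" by linarith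
  then show ?thesis
  proof cases
    case 1
    have "?C * z\<^sup>2 = 9 * c\<^sup>2 * exp (3 * c) / 2 * z\<^sup>2 + exp c * z\<^sup>2"
      by (simp add: algebra_simps)
    moreover have "0 \<le> exp c * z\<^sup>2" by simp
    ultimately have "exp_rem ?w \<le> ?C * z\<^sup>2"
      using exp_rem_small_jump_le[OF assms 1] by linarith
    also have "z\<^sup>2 = min 1 (z\<^sup>2)" using 1 abs_square_le_1[of z] by simp
    finally show ?thesis using 1 by simp
  next
    case 2
    then have "exp ?w \<le> 1" using assms by (simp add: mult_nonneg_nonneg)
    then have "exp_rem ?w \<le> c * (exp z - 1)" by (simp add: exp_rem_def)
    also have "\<dots> \<le> c * exp (2 * z)"
    proof -
      have "exp z \<le> exp (2 * z)" using 2 by simp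
      then have "exp z - 1 \<le> exp (2 * z)" by linarith
      then show ?thesis using assms by (rule mult_left_mono)
    qed
    finally have "exp_rem ?w \<le> c * exp (2 * z)" .
    moreover have "min 1 (z\<^sup>2) = 1" using 2 abs_le_square_iff[of 1 z] by simp
    then have "?C * min 1 (z\<^sup>2) + c * (indicator {z. 1 \<le> \<bar>z\<bar>} z * exp (2 * z)) = ?C + c * exp (2 * z)"
      using 2 by (simp add: indicator_def)
    ultimately show ?thesis using \<open>0 \<le> ?C\<close> by linarith
  next
    case 3
    then have "exp z \<le> 1" by simp
    then have "c * exp z \<le> c" using assms by (rule mult_left_le)
    then have "0 \<le> ?w" "?w \<le> c" using assms by (simp_all add: algebra_simps)
    then have "exp_rem ?w \<le> exp ?w" by (simp add: exp_rem_def)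
    also have "\<dots> \<le> exp c" using \<open>?w \<le> c\<close> by simp
    also have "\<dots> \<le> ?C" by simp
    finally have "exp_rem ?w \<le> ?C" .
    moreover have "min 1 (z\<^sup>2) = 1" using 3 abs_le_square_iff[of 1 z] by simp
    moreover have "0 \<le> c * exp (2 * z)" using assms by simp
    ultimately show ?thesis by (simp add: indicator_def)
  qed
qed

lemma expm1_sq_truncated_le:
  fixes z :: real
  shows "(exp z - 1)\<^sup>2 * indicator {..real n} z \<le> (9 + exp (2 * real n)) * min 1 (z\<^sup>2)"
proof (cases "z \<le> real n")
  case zn: True
  show ?thesis
  proof (cases "\<bar>z\<bar> < 1")
    case True
    have "(exp z - 1)\<^sup>2 \<le> (3 * \<bar>z\<bar>)\<^sup>2"
      using power_mono[OF abs_exp_minus_one_le[of z], of 2] True by simp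
    then have "(exp z - 1)\<^sup>2 \<le> (9 + exp (2 * real n)) * z\<^sup>2"
      by (simp add: power_mult_distrib algebra_simps add_increasing2)
    moreover have "z\<^sup>2 \<le> 1" using True by (simp add: abs_square_le_1)
    ultimately show ?thesis using zn by (simp add: min_def indicator_def)
  next
    case False
    have "(exp z - 1)\<^sup>2 \<le> 1 + exp (2 * real n)"
    proof (cases "0 \<le> z")
      case True
      then have "(exp z - 1)\<^sup>2 \<le> (exp z)\<^sup>2" by (intro power_mono) auto
      also have "\<dots> = exp (2 * z)" by (simp flip: exp_of_nat_mult)
      also have "\<dots> \<le> exp (2 * real n)" using zn by simp
      finally show ?thesis by simp
    next
      case False
      then have "(exp z - 1)\<^sup>2 \<le> 1" by (simp add: abs_square_le_1)
      then show ?thesis using exp_gt_zero[of "2 * real n"] by linarith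
    qed
    moreover have "1 \<le> z\<^sup>2" using False abs_le_square_iff[of 1 z] by simp
    ultimately show ?thesis using zn by (simp add: min_def indicator_def)
  qed
qed (simp add: indicator_def)

locale levy_measure =
  fixes mu sig :: real and nu :: "real measure"
  assumes nu_density: "\<exists>g. g \<in> borel_measurable borel \<and> nu = density lborel g"
    and nu_levy: "integrable nu (\<lambda>z. min 1 (z\<^sup>2))"
    and nu_expmom: "set_integrable nu {z. 1 \<le> \<bar>z\<bar>} (\<lambda>z. exp (2 * z))"
begin

lemma sets_nu[measurable_cong]: "sets nu = sets borel"
  using nu_density by auto

lemma space_nu[simp]: "space nu = UNIV"
  using sets_eq_imp_space_eq[OF sets_nu] by simp

lemma measurable_nu: "f \<in> borel_measurable borel \<Longrightarrow> f \<in> borel_measurable nu"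
  by (simp add: measurable_def sets_nu)

lemma integrable_exp_rem_jump:
  assumes "x \<le> 0"
  shows "integrable nu (\<lambda>z. exp_rem (x * (exp z - 1)))"
proof (rule Bochner_Integration.integrable_bound)
  let ?C = "9 * x\<^sup>2 * exp (3 * - x) / 2 + exp (- x)"
  show "integrable nu (\<lambda>z. ?C * min 1 (z\<^sup>2) + - x * (indicator {z. 1 \<le> \<bar>z\<bar>} z * exp (2 * z)))"
    using nu_levy nu_expmom unfolding set_integrable_def by (intro Bochner_Integration.integrable_add) auto
  show "(\<lambda>z. exp_rem (x * (exp z - 1))) \<in> borel_measurable nu"
    by (intro measurable_nu) (simp add: exp_rem_def)
  show "AE z in nu. norm (exp_rem (x * (exp z - 1)))
      \<le> norm (?C * min 1 (z\<^sup>2) + - x * (indicator {z. 1 \<le> \<bar>z\<bar>} z * exp (2 * z)))"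
  proof (intro AE_I2)
    fix z :: real
    have "exp_rem (x * (exp z - 1)) \<le> ?C * min 1 (z\<^sup>2) + - x * (indicator {z. 1 \<le> \<bar>z\<bar>} z * exp (2 * z))"
      using exp_rem_compensated_jump_le[of "- x" z] assms by simp
    moreover have "0 \<le> - x * (indicator {z. 1 \<le> \<bar>z\<bar>} z * exp (2 * z))"
      using assms by (intro mult_nonneg_nonneg) auto
    ultimately show "norm (exp_rem (x * (exp z - 1)))
        \<le> norm (?C * min 1 (z\<^sup>2) + - x * (indicator {z. 1 \<le> \<bar>z\<bar>} z * exp (2 * z)))"
      using exp_rem_nonneg by simp
  qed
qed

definition jump_term :: "real \<Rightarrow> real" where
  "jump_term x = (\<integral>z. exp_rem (x * (exp z - 1)) \<partial>nu)"

lemma kappaA_eq: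
  "kappaA mu sig nu a u = mtilde mu sig nu * (- a * u) + sig\<^sup>2 * (a * u)\<^sup>2 / 2 + jump_term (- a * u)"
  by (simp add: kappaA_def kappahat_def jump_term_def exp_rem_def power2_eq_square)

lemma jump_term_nonneg: "0 \<le> jump_term x"
  unfolding jump_term_def by (intro integral_nonneg_AE) (simp add: exp_rem_nonneg)

lemma jump_term_mono:
  assumes "0 < a" "0 \<le> u" "u \<le> v"
  shows "jump_term (- a * u) \<le> jump_term (- a * v)"
proof (cases "v = 0")
  case False
  then have "0 < v" using assms by simp
  show ?thesis unfolding jump_term_def
  proof (rule integral_mono)
    show "integrable nu (\<lambda>z. exp_rem (- a * u * (exp z - 1)))"
      using assms by (intro integrable_exp_rem_jump) simp
    show "integrable nu (\<lambda>z. exp_rem (- a * v * (exp z - 1)))"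
      using assms by (intro integrable_exp_rem_jump) simp
    fix z
    have "exp_rem ((u / v) * (- a * v * (exp z - 1))) \<le> exp_rem (- a * v * (exp z - 1))"
      using assms \<open>0 < v\<close> by (intro exp_rem_scale) auto
    moreover have "(u / v) * (- a * v * (exp z - 1)) = - a * u * (exp z - 1)"
      using \<open>0 < v\<close> by simp
    ultimately show "exp_rem (- a * u * (exp z - 1)) \<le> exp_rem (- a * v * (exp z - 1))"
      by simp
  qed
qed (use assms in simp)

lemma kappaA_0: "kappaA mu sig nu a 0 = 0"
  by (simp add: kappaA_eq jump_term_def exp_rem_def)

lemma kappaA_mono:
  assumes "mtilde mu sig nu \<le> 0" "0 < a" "0 \<le> u" "u \<le> v"
  shows "kappaA mu sig nu a u \<le> kappaA mu sig nu a v"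
proof -
  have "mtilde mu sig nu * (- a * u) \<le> mtilde mu sig nu * (- a * v)"
    using assms by (intro mult_left_mono_neg) auto
  moreover have "sig\<^sup>2 * (a * u)\<^sup>2 / 2 \<le> sig\<^sup>2 * (a * v)\<^sup>2 / 2"
    using assms by (intro divide_right_mono mult_left_mono power_mono) auto
  ultimately show ?thesis unfolding kappaA_eq using jump_term_mono[OF assms(2-4)] by linarith
qed

lemma kappaA_linear_lower:
  assumes "0 \<le> u"
  shows "- mtilde mu sig nu * a * u \<le> kappaA mu sig nu a u"
  unfolding kappaA_eq using jump_term_nonneg[of "- a * u"] by (simp add: algebra_simps)

lemma nu_nonzero:
  assumes "mu \<noteq> 0 \<or> sig \<noteq> 0 \<or> emeasure nu UNIV \<noteq> 0" and "mtilde mu sig nu = 0" and "sig = 0"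
  shows "emeasure nu UNIV \<noteq> 0"
proof
  assume null: "emeasure nu UNIV = 0"
  then have "AE z in nu. False" using AE_iff_measurable[of "space nu" nu "\<lambda>_. False"] by simp
  then have "(\<integral>z. (exp z - 1 - z * indicator {-1<..<1} z) \<partial>nu) = 0"
    by (intro integral_eq_zero_AE) (auto elim: eventually_mono)
  then have "mu = 0" using assms(2,3) by (simp add: mtilde_def)
  then show False using assms(1,3) null by simp
qed

lemma integrable_expm1_sq_truncated: "integrable nu (\<lambda>z. (exp z - 1)\<^sup>2 * indicator {..real n} z)"
proof (rule Bochner_Integration.integrable_bound)
  show "integrable nu (\<lambda>z. (9 + exp (2 * real n)) * min 1 (z\<^sup>2))" using nu_levy by simp
  show "(\<lambda>z. (exp z - 1)\<^sup>2 * indicator {..real n} z) \<in> borel_measurable nu"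
    by (intro measurable_nu) measurable
  show "AE z in nu. norm ((exp z - 1)\<^sup>2 * indicator {..real n} z) \<le> norm ((9 + exp (2 * real n)) * min 1 (z\<^sup>2))"
    using expm1_sq_truncated_le[of _ n] by (intro AE_I2) (simp add: abs_mult)
qed

text \<open>Since \<open>\<nu>\<close> has a density it does not charge \<open>{0}\<close>, so a nonzero \<open>\<nu>\<close> gives positive mass to
  \<open>(exp z - 1)\<^sup>2\<close> on some half-line \<open>(-\<infinity>, n]\<close>.\<close>

lemma expm1_sq_truncated_pos:
  assumes "emeasure nu UNIV \<noteq> 0"
  shows "\<exists>n::nat. 0 < (\<integral>z. (exp z - 1)\<^sup>2 * indicator {..real n} z \<partial>nu)"
proof (rule ccontr)
  assume "\<not> ?thesis"
  moreover have "0 \<le> (\<integral>z. (exp z - 1)\<^sup>2 * indicator {..real n} z \<partial>nu)" for n :: nat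
    by (intro integral_nonneg_AE) auto
  ultimately have "(\<integral>z. (exp z - 1)\<^sup>2 * indicator {..real n} z \<partial>nu) = 0" for n :: nat
    by (meson not_less order.antisym)
  then have "AE z in nu. (exp z - 1)\<^sup>2 * indicator {..real n} z = 0" for n :: nat
    using integral_nonneg_eq_0_iff_AE[OF integrable_expm1_sq_truncated] by auto
  then have "AE z in nu. \<forall>n::nat. (exp z - 1)\<^sup>2 * indicator {..real n} z = 0"
    unfolding AE_all_countable by blast
  then have "AE z in nu. z = 0"
  proof (rule eventually_mono)
    fix z :: real assume vanish: "\<forall>n::nat. (exp z - 1)\<^sup>2 * indicator {..real n} z = 0"
    obtain n :: nat where "z \<le> real n" using real_arch_simple by blast
    then show "z = 0" using vanish[rule_format, of n] by (simp add: indicator_def)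
  qed
  moreover obtain g where g: "g \<in> borel_measurable borel" "nu = density lborel g"
    using nu_density by auto
  then have "AE z in nu. z \<noteq> 0"
    unfolding g(2) using AE_lborel_singleton[of 0] by (subst AE_density) (auto elim: eventually_mono)
  ultimately have "AE z in nu. False" by eventually_elim simp
  then show False using assms AE_iff_measurable[of "space nu" nu "\<lambda>_. False"] by simp
qed

text \<open>The quadratic term comes from the Gaussian part if \<open>sig \<noteq> 0\<close>, and otherwise from the jumps
  below some level \<open>n\<close>, where the argument of \<open>exp_rem\<close> is bounded below, so that \<open>exp_rem\<close> is
  at least a fixed multiple of its square.\<close>

lemma kappaA_quadratic_lower:
  assumes nontrivial: "mu \<noteq> 0 \<or> sig \<noteq> 0 \<or> emeasure nu UNIV \<noteq> 0"
    and m0: "mtilde mu sig nu = 0" and "0 < a" and "0 \<le> Y"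
  shows "\<exists>b>0. \<forall>u\<in>{0..Y}. b * u\<^sup>2 \<le> kappaA mu sig nu a u"
proof (cases "sig = 0")
  case False
  show ?thesis
  proof (intro exI[of _ "sig\<^sup>2 * a\<^sup>2 / 2"] conjI ballI)
    show "0 < sig\<^sup>2 * a\<^sup>2 / 2" using False \<open>0 < a\<close> by simp
    fix u assume "u \<in> {0..Y}"
    show "sig\<^sup>2 * a\<^sup>2 / 2 * u\<^sup>2 \<le> kappaA mu sig nu a u"
      unfolding kappaA_eq using m0 jump_term_nonneg[of "- a * u"] by (simp add: power_mult_distrib)
  qed
next
  case True
  obtain n :: nat where J: "0 < (\<integral>z. (exp z - 1)\<^sup>2 * indicator {..real n} z \<partial>nu)"
    using expm1_sq_truncated_pos[OF nu_nonzero[OF nontrivial m0 True]] by auto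
  define M where "M = a * Y * exp (real n)"
  have "0 \<le> M" using \<open>0 < a\<close> \<open>0 \<le> Y\<close> by (simp add: M_def)
  let ?J = "\<integral>z. (exp z - 1)\<^sup>2 * indicator {..real n} z \<partial>nu"
  show ?thesis
  proof (intro exI[of _ "exp (- M) / 2 * a\<^sup>2 * ?J"] conjI ballI)
    show "0 < exp (- M) / 2 * a\<^sup>2 * ?J" using J \<open>0 < a\<close> by simp
    fix u assume u: "u \<in> {0..Y}"
    have "exp (- M) / 2 * a\<^sup>2 * ?J * u\<^sup>2
        = (\<integral>z. exp (- M) / 2 * (a * u)\<^sup>2 * ((exp z - 1)\<^sup>2 * indicator {..real n} z) \<partial>nu)"
      unfolding integral_mult_right_zero by (simp add: power_mult_distrib algebra_simps)
    also have "\<dots> \<le> jump_term (- a * u)"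
      unfolding jump_term_def
    proof (rule integral_mono)
      show "integrable nu (\<lambda>z. exp (- M) / 2 * (a * u)\<^sup>2 * ((exp z - 1)\<^sup>2 * indicator {..real n} z))"
        using integrable_expm1_sq_truncated by simp
      show "integrable nu (\<lambda>z. exp_rem (- a * u * (exp z - 1)))"
        using \<open>0 < a\<close> u by (intro integrable_exp_rem_jump) simp
      fix z
      show "exp (- M) / 2 * (a * u)\<^sup>2 * ((exp z - 1)\<^sup>2 * indicator {..real n} z) \<le> exp_rem (- a * u * (exp z - 1))"
      proof (cases "z \<le> real n")
        case True
        then show ?thesis
          using exp_rem_jump_ge[of "a * u" "a * Y" z n] \<open>0 < a\<close> u by (simp add: M_def ac_simps)
      qed (simp add: exp_rem_nonneg)
    qed
    also have "\<dots> = kappaA mu sig nu a u" unfolding kappaA_eq using m0 True by simp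
    finally show "exp (- M) / 2 * a\<^sup>2 * ?J * u\<^sup>2 \<le> kappaA mu sig nu a u" .
  qed
qed

lemma kappaA_pos:
  assumes "mu \<noteq> 0 \<or> sig \<noteq> 0 \<or> emeasure nu UNIV \<noteq> 0" and "mtilde mu sig nu \<le> 0"
    and "0 < a" and "0 < u"
  shows "0 < kappaA mu sig nu a u"
proof (cases "mtilde mu sig nu = 0")
  case True
  then obtain b where "0 < b" "\<forall>v\<in>{0..u}. b * v\<^sup>2 \<le> kappaA mu sig nu a v"
    using kappaA_quadratic_lower[OF assms(1) True \<open>0 < a\<close>, of u] \<open>0 < u\<close> by auto
  then have "b * u\<^sup>2 \<le> kappaA mu sig nu a u" and "0 < b * u\<^sup>2" using \<open>0 < u\<close> by auto
  then show ?thesis by linarith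
next
  case False
  then have "0 < - mtilde mu sig nu * a * u" using assms by (simp add: mult_neg_pos)
  then show ?thesis using kappaA_linear_lower[of u a] \<open>0 < u\<close> by simp
qed

lemma execution_problem_kappaA:
  assumes "impact_function F"
    and nontrivial: "mu \<noteq> 0 \<or> sig \<noteq> 0 \<or> emeasure nu UNIV \<noteq> 0"
    and m_nonpos: "mtilde mu sig nu \<le> 0" and "0 < A" and "0 < a" and "0 \<le> y"
  shows "execution_problem F (kappaA mu sig nu a) A y (mtilde mu sig nu)"
proof (intro execution_problem.intro execution_problem_axioms.intro)
  assume "mtilde mu sig nu \<noteq> 0"
  then have "0 < - mtilde mu sig nu * a" using m_nonpos \<open>0 < a\<close> by (simp add: mult_neg_pos)
  then show "\<exists>b>0. \<forall>u\<in>{0..y}. b * u \<le> kappaA mu sig nu a u"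
    using kappaA_linear_lower[of _ a] by (intro exI[of _ "- mtilde mu sig nu * a"]) auto
qed (use assms kappaA_0 kappaA_mono kappaA_pos kappaA_quadratic_lower in auto)

end

theorem mainTheorem15:
  fixes mu sig :: real and nu :: "real measure"
    and stilde A y :: real and F :: "real \<Rightarrow> real"
  assumes nu_density: "\<exists>g. g \<in> borel_measurable borel \<and> nu = density lborel g"
    and nu_levy: "integrable nu (\<lambda>z. min 1 (z\<^sup>2))"
    and nu_expmom: "set_integrable nu {z. 1 \<le> \<bar>z\<bar>} (\<lambda>z. exp (2 * z))"
    and nontrivial: "mu \<noteq> 0 \<or> sig \<noteq> 0 \<or> emeasure nu UNIV \<noteq> 0"
    and m_nonpos: "mtilde mu sig nu \<le> 0"
    and stilde_pos: "0 < stilde"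
    and A_pos: "0 < A"
    and F_nonneg: "\<forall>x\<ge>0. 0 \<le> F x"
    and F_cont: "continuous_on {0..} F"
    and F_diff: "\<forall>x>0. F differentiable (at x)"
    and F'_cont: "continuous_on {0<..} (deriv F)"
    and F_zero: "F 0 = 0"
    and F_conv: "strictly_convex_on {0..} (\<lambda>x. x * F x)"
    and F_mono: "strict_mono_on {0<..} (\<lambda>x. x\<^sup>2 * deriv F x)"
    and F_lim: "filterlim (\<lambda>x. x\<^sup>2 * deriv F x) at_top at_top"
    and y_nonneg: "0 \<le> y"
  shows
    "let m = mtilde mu sig nu;
         K = kappaA mu sig nu (A * stilde);
         G = invG F;
         Y = Ystar K A F y;
         \<xi> = (\<lambda>t. G (K (Y t) / A))
     in admissible m y \<xi>
        \<and> (\<forall>t\<ge>0. traj y \<xi> t = Y t)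
        \<and> cost K A F y \<xi> = valueV m K A F y
        \<and> (\<forall>\<eta>. admissible m y \<eta> \<and> cost K A F y \<eta> = valueV m K A F y
               \<longrightarrow> (\<forall>t\<ge>0. traj y \<eta> t = Y t))
        \<and> valueV m K A F y =
            (\<integral>\<^sup>+ u\<in>{0..y}. ennreal (K u / G (K u / A) + A * F (G (K u / A))) \<partial>lborel)"
proof -
  interpret levy_measure mu sig nu
    using nu_density nu_levy nu_expmom by unfold_locales
  interpret impact_function F
    using F_nonneg F_cont F_diff F'_cont F_zero F_conv F_mono F_lim by unfold_locales
  interpret execution_problem F "kappaA mu sig nu (A * stilde)" A y "mtilde mu sig nu"
    using execution_problem_kappaA impact_function_axioms nontrivial m_nonpos A_pos stilde_pos y_nonneg
    by simp
  show ?thesis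
    using opt_speed_unique_optimal unfolding Let_def opt_speed_def[abs_def] speed_def unit_cost_def by simp
qed

end
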